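(* For any $n$-qubit density matrix $\rho$, $$\mathcal R(\rho)\ge2\Lambda^+(\rho)-1.$$ Furthermore, if $\rho$ is a single-qubit state, $$\mathcal R(\rho)\ge(1+\sqrt2)\Lambda^+(\rho)-\sqrt2.$$
   Context: $\mathrm S_n$ is the set of pure $n$-qubit stabilizer states and $\bar{\mathrm S}_n=\mathrm{conv}\{|\phi\rangle\langle\phi|:|\phi\rangle\in\mathrm S_n\}$. The robustness of magic is $\mathcal R(\rho)=\min\{\|q\|_1:\rho=\sum_jq_j|\phi_j\rangle\langle\phi_j|,\ q_j\in\mathbb R,\ |\phi_j\rangle\in\mathrm S_n\}$. The generalized robustness is $\Lambda^+(\rho)=\min\{\lambda:\rho\le\lambda\sigma,\ \sigma\in\bar{\mathrm S}_n\}$. *)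

theory Defs
  imports Complex_Main "Jordan_Normal_Form.Matrix"
begin

definition dagger :: "complex mat \<Rightarrow> complex mat" where
  "dagger A = mat (dim_col A) (dim_row A) (\<lambda>(i,j). cnj (A $$ (j,i)))"

definition outer :: "complex vec \<Rightarrow> complex mat" where
  "outer v = mat (dim_vec v) (dim_vec v) (\<lambda>(i,j). v $ i * cnj (v $ j))"

definition mtrace :: "complex mat \<Rightarrow> complex" where
  "mtrace A = (\<Sum>i<dim_row A. A $$ (i,i))"

definition psd :: "nat \<Rightarrow> complex mat \<Rightarrow> bool" where
  "psd d A \<longleftrightarrow> A \<in> carrier_mat d d \<and> dagger A = A \<and>
     (\<forall>v \<in> carrier_vec d. 0 \<le> Re (\<Sum>i<d. cnj (v $ i) * (A *\<^sub>v v) $ i))"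

definition density :: "nat \<Rightarrow> complex mat \<Rightarrow> bool" where
  "density n \<rho> \<longleftrightarrow> psd (2^n) \<rho> \<and> mtrace \<rho> = 1"

definition msum :: "nat \<Rightarrow> 'b set \<Rightarrow> ('b \<Rightarrow> complex mat) \<Rightarrow> complex mat" where
  "msum d F f = mat d d (\<lambda>(i,j). \<Sum>x\<in>F. f x $$ (i,j))"

text \<open>Single-qubit Paulis: 0 = I, 1 = X, 2 = Y, 3 = Z.\<close>
definition pauli1 :: "nat \<Rightarrow> complex mat" where
  "pauli1 k = (if k = 0 then mat_of_rows_list 2 [[1,0],[0,1]]
     else if k = 1 then mat_of_rows_list 2 [[0,1],[1,0]]
     else if k = 2 then mat_of_rows_list 2 [[0,-\<i>],[\<i>,0]]
     else mat_of_rows_list 2 [[1,0],[0,-1]])"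

text \<open>The n-qubit Pauli string s (tensor product of pauli1 (s k), k < n); qubit k
  corresponds to bit k of the basis index.\<close>
definition pauli_string :: "nat \<Rightarrow> (nat \<Rightarrow> nat) \<Rightarrow> complex mat" where
  "pauli_string n s = mat (2^n) (2^n)
     (\<lambda>(i,j). \<Prod>k<n. pauli1 (s k) $$ (i div 2^k mod 2, j div 2^k mod 2))"

definition signed_paulis :: "nat \<Rightarrow> complex mat set" where
  "signed_paulis n = {of_real \<sigma> \<cdot>\<^sub>m pauli_string n s | \<sigma> s.
       (\<sigma> = 1 \<or> \<sigma> = -1) \<and> (\<forall>k<n. s k < 4)}"

text \<open>Stabilizer group of a vector within the Pauli group (elements with phase \<plusminus>i
  can never stabilize a nonzero vector, so they are omitted).\<close>
definition stab_group :: "nat \<Rightarrow> complex vec \<Rightarrow> complex mat set" where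
  "stab_group n \<psi> = {P \<in> signed_paulis n. P *\<^sub>v \<psi> = \<psi>}"

definition stabilizer_state :: "nat \<Rightarrow> complex vec \<Rightarrow> bool" where
  "stabilizer_state n \<psi> \<longleftrightarrow> \<psi> \<in> carrier_vec (2^n) \<and>
     (\<Sum>i<2^n. (cmod (\<psi> $ i))^2) = 1 \<and> card (stab_group n \<psi>) = 2^n"

definition stab_projs :: "nat \<Rightarrow> complex mat set" where
  "stab_projs n = {outer \<psi> | \<psi>. stabilizer_state n \<psi>}"

definition robustness :: "nat \<Rightarrow> complex mat \<Rightarrow> real" where
  "robustness n \<rho> = Inf {(\<Sum>P\<in>F. \<bar>q P\<bar>) | F q.
      finite F \<and> F \<subseteq> stab_projs n \<and>
      \<rho> = msum (2^n) F (\<lambda>P. of_real (q P) \<cdot>\<^sub>m P)}"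

definition stab_mixed :: "nat \<Rightarrow> complex mat set" where
  "stab_mixed n = {msum (2^n) F (\<lambda>P. of_real (p P) \<cdot>\<^sub>m P) | F p.
      finite F \<and> F \<subseteq> stab_projs n \<and> (\<forall>P\<in>F. 0 \<le> p P) \<and> (\<Sum>P\<in>F. p P) = 1}"

definition gen_robustness :: "nat \<Rightarrow> complex mat \<Rightarrow> real" where
  "gen_robustness n \<rho> = Inf {t. \<exists>\<sigma>\<in>stab_mixed n.
      psd (2^n) (of_real t \<cdot>\<^sub>m \<sigma> - \<rho>)}"

end

theory Submission
  imports Defs "HOL-Library.FuncSet"
begin

(*
  Taking traces in a real decomposition rho = sum_P q_P P into stabilizer projectors gives
  sum_P q_P = 1. If p is the total positive weight, the normalised positive part sigma is a mixed
  stabilizer state and p sigma - rho is the negated negative part, a positive matrix; hence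
  Lambda+ <= p, while ||q||_1 = 2p - 1. Decompositions exist, so that the infimum defining R is
  over a nonempty set, because tensor products of |0>, |1>, |+>, |+i> span all matrices.

  For one qubit write rho = (I + x X + y Y + z Z)/2. Every stabilizer projector has Bloch vector
  +-e_x, +-e_y or +-e_z, so ||q||_1 >= s = |x| + |y| + |z| (and ||q||_1 >= 1). If s <= 1, rho lies
  in the stabilizer octahedron and Lambda+ <= 1. Otherwise, with l = (s + sqrt 2)/(1 + sqrt 2),
  some point l b with b in the octahedron lies within Euclidean distance l - 1 of (x, y, z), which
  makes l sigma_b - rho positive; hence (1 + sqrt 2) Lambda+ - sqrt 2 <= s.
*)

definition quad_form :: "nat \<Rightarrow> complex mat \<Rightarrow> complex vec \<Rightarrow> complex" where
  "quad_form d A v = (\<Sum>i<d. cnj (v $ i) * (A *\<^sub>v v) $ i)"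

lemma quad_form_expand:
  assumes "A \<in> carrier_mat d d" "v \<in> carrier_vec d"
  shows "quad_form d A v = (\<Sum>i<d. \<Sum>j<d. cnj (v $ i) * A $$ (i,j) * v $ j)"
  using assms unfolding quad_form_def
  by (auto simp: scalar_prod_def sum_distrib_left mult.assoc atLeast0LessThan intro!: sum.cong)

lemma quad_form_unit_vec:
  assumes "A \<in> carrier_mat d d" "i < d"
  shows "quad_form d A (unit_vec d i) = A $$ (i,i)"
  using assms unfolding quad_form_def
  by (simp add: unit_vec_def scalar_prod_def if_distrib if_distribR sum.delta cong: if_cong)

lemma psd_carrier: "psd d A \<Longrightarrow> A \<in> carrier_mat d d"
  unfolding psd_def by auto

lemma psd_quad_form_nonneg: "psd d A \<Longrightarrow> v \<in> carrier_vec d \<Longrightarrow> 0 \<le> Re (quad_form d A v)"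
  unfolding psd_def quad_form_def by auto

lemma hermitian_index:
  assumes "A \<in> carrier_mat d d" "dagger A = A" "i < d" "j < d"
  shows "A $$ (j,i) = cnj (A $$ (i,j))"
proof -
  have "A $$ (j,i) = dagger A $$ (j,i)" using assms(2) by simp
  also have "\<dots> = cnj (A $$ (i,j))" using assms(1,3,4) unfolding dagger_def by auto
  finally show ?thesis .
qed

lemma psd_hermitian: "psd d A \<Longrightarrow> i < d \<Longrightarrow> j < d \<Longrightarrow> A $$ (j,i) = cnj (A $$ (i,j))"
  using hermitian_index psd_carrier unfolding psd_def by blast

lemma psdI:
  assumes A: "A \<in> carrier_mat d d"
    and herm: "\<And>i j. i < d \<Longrightarrow> j < d \<Longrightarrow> A $$ (j,i) = cnj (A $$ (i,j))"
    and nonneg: "\<And>v. v \<in> carrier_vec d \<Longrightarrow> 0 \<le> Re (quad_form d A v)"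
  shows "psd d A"
proof -
  have "dagger A = A"
  proof (rule eq_matI)
    fix i j assume "i < dim_row A" "j < dim_col A"
    then show "dagger A $$ (i,j) = A $$ (i,j)"
      using A herm[of j i] unfolding dagger_def by simp
  qed (use A in \<open>auto simp: dagger_def\<close>)
  then show ?thesis using A nonneg unfolding psd_def quad_form_def by auto
qed

lemma quad_form_lincomb:
  assumes G: "finite G" and A: "A \<in> carrier_mat d d" and v: "v \<in> carrier_vec d"
    and P: "\<And>x. x \<in> G \<Longrightarrow> P x \<in> carrier_mat d d"
    and ent: "\<And>i j. i < d \<Longrightarrow> j < d \<Longrightarrow> A $$ (i,j) = (\<Sum>x\<in>G. c x * P x $$ (i,j))"
  shows "quad_form d A v = (\<Sum>x\<in>G. c x * quad_form d (P x) v)"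
proof -
  have "quad_form d A v = (\<Sum>i<d. \<Sum>j<d. \<Sum>x\<in>G. c x * (cnj (v $ i) * P x $$ (i,j) * v $ j))"
    unfolding quad_form_expand[OF A v]
    by (intro sum.cong refl) (simp add: ent sum_distrib_left sum_distrib_right mult_ac)
  also have "\<dots> = (\<Sum>x\<in>G. \<Sum>i<d. \<Sum>j<d. c x * (cnj (v $ i) * P x $$ (i,j) * v $ j))"
    by (subst sum.swap) (simp add: sum.swap[of _ G])
  also have "\<dots> = (\<Sum>x\<in>G. c x * quad_form d (P x) v)"
    by (intro sum.cong refl) (simp add: quad_form_expand[OF P v] sum_distrib_left)
  finally show ?thesis .
qed

lemma psd_nonneg_lincomb:
  assumes G: "finite G" and A: "A \<in> carrier_mat d d"
    and ent: "\<And>i j. i < d \<Longrightarrow> j < d \<Longrightarrow> A $$ (i,j) = (\<Sum>x\<in>G. of_real (c x) * P x $$ (i,j))"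
    and c: "\<And>x. x \<in> G \<Longrightarrow> 0 \<le> c x" and P: "\<And>x. x \<in> G \<Longrightarrow> psd d (P x)"
  shows "psd d A"
proof (rule psdI[OF A])
  fix i j assume ij: "i < d" "j < d"
  have "A $$ (j,i) = (\<Sum>x\<in>G. of_real (c x) * cnj (P x $$ (i,j)))"
    unfolding ent[OF ij(2,1)] by (intro sum.cong refl) (simp only: psd_hermitian[OF P ij])
  then show "A $$ (j,i) = cnj (A $$ (i,j))"
    using ij by (simp add: ent cnj_sum)
next
  fix v :: "complex vec" assume v: "v \<in> carrier_vec d"
  have "Re (quad_form d A v) = (\<Sum>x\<in>G. c x * Re (quad_form d (P x) v))"
    using quad_form_lincomb[OF G A v psd_carrier[OF P] ent] by (simp add: Re_sum)
  also have "\<dots> \<ge> 0"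
    using c psd_quad_form_nonneg[OF P v] by (intro sum_nonneg) auto
  finally show "0 \<le> Re (quad_form d A v)" .
qed

lemma psd_trace_nonneg:
  assumes "psd d A" shows "0 \<le> Re (mtrace A)"
proof -
  have A: "A \<in> carrier_mat d d" using assms psd_carrier by auto
  have "0 \<le> Re (A $$ (i,i))" if "i < d" for i
    using psd_quad_form_nonneg[OF assms, of "unit_vec d i"] quad_form_unit_vec[OF A that] by simp
  then show ?thesis using A unfolding mtrace_def by (auto simp: Re_sum intro!: sum_nonneg)
qed

lemma outer_carrier: "\<psi> \<in> carrier_vec d \<Longrightarrow> outer \<psi> \<in> carrier_mat d d"
  unfolding outer_def by auto

lemma outer_psd:
  assumes \<psi>: "\<psi> \<in> carrier_vec d" shows "psd d (outer \<psi>)"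
proof (rule psdI[OF outer_carrier[OF \<psi>]])
  fix i j assume "i < d" "j < d"
  then show "outer \<psi> $$ (j, i) = cnj (outer \<psi> $$ (i, j))"
    using \<psi> unfolding outer_def by auto
next
  fix v :: "complex vec" assume v: "v \<in> carrier_vec d"
  define z where "z = (\<Sum>i<d. cnj (v $ i) * \<psi> $ i)"
  have "quad_form d (outer \<psi>) v = (\<Sum>i<d. \<Sum>j<d. (cnj (v $ i) * \<psi> $ i) * cnj (cnj (v $ j) * \<psi> $ j))"
    unfolding quad_form_expand[OF outer_carrier[OF \<psi>] v] using \<psi> by (simp add: outer_def mult_ac)
  also have "\<dots> = z * cnj z"
    by (simp only: z_def cnj_sum sum_product)
  finally show "0 \<le> Re (quad_form d (outer \<psi>) v)" by simp
qed

lemma outer_trace: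
  assumes "\<psi> \<in> carrier_vec d" "(\<Sum>i<d. (cmod (\<psi> $ i))^2) = 1"
  shows "mtrace (outer \<psi>) = 1"
proof -
  have "mtrace (outer \<psi>) = (\<Sum>i<d. \<psi> $ i * cnj (\<psi> $ i))"
    using assms unfolding mtrace_def outer_def by auto
  also have "\<dots> = of_real (\<Sum>i<d. (cmod (\<psi> $ i))^2)"
    by (simp only: of_real_sum complex_norm_square)
  finally show ?thesis using assms(2) by simp
qed

abbreviation real_comb :: "nat \<Rightarrow> complex mat set \<Rightarrow> (complex mat \<Rightarrow> real) \<Rightarrow> complex mat" where
  "real_comb n F q \<equiv> msum (2^n) F (\<lambda>P. of_real (q P) \<cdot>\<^sub>m P)"

lemma stab_projsE:
  assumes "P \<in> stab_projs n"
  obtains \<psi> where "P = outer \<psi>" "\<psi> \<in> carrier_vec (2^n)" "(\<Sum>i<2^n. (cmod (\<psi> $ i))^2) = 1"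
    "card (stab_group n \<psi>) = 2^n"
  using assms unfolding stab_projs_def stabilizer_state_def by blast

lemma stab_proj_carrier: "P \<in> stab_projs n \<Longrightarrow> P \<in> carrier_mat (2^n) (2^n)"
  by (erule stab_projsE) (simp add: outer_carrier)

lemma stab_proj_psd: "P \<in> stab_projs n \<Longrightarrow> psd (2^n) P"
  by (erule stab_projsE) (simp add: outer_psd)

lemma stab_proj_trace: "P \<in> stab_projs n \<Longrightarrow> mtrace P = 1"
  by (erule stab_projsE) (simp add: outer_trace)

lemma msum_carrier: "msum d F f \<in> carrier_mat d d"
  unfolding msum_def by simp

lemma msum_dims [simp]: "dim_row (msum d F f) = d" "dim_col (msum d F f) = d"
  unfolding msum_def by simp_all

lemma msum_smult_index:
  assumes "\<And>P. P \<in> F \<Longrightarrow> P \<in> carrier_mat d d" "i < d" "j < d"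
  shows "msum d F (\<lambda>P. c P \<cdot>\<^sub>m P) $$ (i,j) = (\<Sum>P\<in>F. c P * P $$ (i,j))"
proof -
  have "(c P \<cdot>\<^sub>m P) $$ (i,j) = c P * P $$ (i,j)" if "P \<in> F" for P
    using assms(1)[OF that] assms(2,3) by simp
  then show ?thesis using assms(2,3) unfolding msum_def by simp
qed

lemma real_comb_index:
  "F \<subseteq> stab_projs n \<Longrightarrow> i < 2^n \<Longrightarrow> j < 2^n \<Longrightarrow>
    real_comb n F q $$ (i,j) = (\<Sum>P\<in>F. of_real (q P) * P $$ (i,j))"
  by (rule msum_smult_index) (auto intro: stab_proj_carrier)

lemma mtrace_msum_smult:
  assumes "\<And>P. P \<in> F \<Longrightarrow> P \<in> carrier_mat d d"
  shows "mtrace (msum d F (\<lambda>P. c P \<cdot>\<^sub>m P)) = (\<Sum>P\<in>F. c P * mtrace P)"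
proof -
  have "mtrace (msum d F (\<lambda>P. c P \<cdot>\<^sub>m P)) = (\<Sum>i<d. \<Sum>P\<in>F. c P * P $$ (i,i))"
    unfolding mtrace_def using msum_smult_index[OF assms] by simp
  also have "\<dots> = (\<Sum>P\<in>F. \<Sum>i<d. c P * P $$ (i,i))" by (rule sum.swap)
  also have "\<dots> = (\<Sum>P\<in>F. c P * mtrace P)"
    using assms unfolding mtrace_def by (auto simp: sum_distrib_left intro!: sum.cong)
  finally show ?thesis .
qed

lemma mtrace_real_comb:
  assumes "F \<subseteq> stab_projs n"
  shows "mtrace (real_comb n F q) = of_real (\<Sum>P\<in>F. q P)"
proof -
  have "mtrace (real_comb n F q) = (\<Sum>P\<in>F. of_real (q P) * mtrace P)"
    by (rule mtrace_msum_smult) (use assms stab_proj_carrier in auto)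
  then show ?thesis using assms stab_proj_trace by (auto simp: of_real_sum intro!: sum.cong)
qed

lemma stab_mixed_carrier: "\<sigma> \<in> stab_mixed n \<Longrightarrow> \<sigma> \<in> carrier_mat (2^n) (2^n)"
  unfolding stab_mixed_def by (auto simp: msum_carrier)

lemma stab_mixed_trace: "\<sigma> \<in> stab_mixed n \<Longrightarrow> mtrace \<sigma> = 1"
  unfolding stab_mixed_def by (auto simp: mtrace_real_comb)

lemma density_psd: "density n \<rho> \<Longrightarrow> psd (2^n) \<rho>"
  unfolding density_def by simp

lemma density_carrier: "density n \<rho> \<Longrightarrow> \<rho> \<in> carrier_mat (2^n) (2^n)"
  by (rule psd_carrier[OF density_psd])

lemma density_trace: "density n \<rho> \<Longrightarrow> mtrace \<rho> = 1"
  unfolding density_def by simp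

lemma gen_robustness_feasible_ge_1:
  assumes \<rho>: "density n \<rho>" and \<sigma>: "\<sigma> \<in> stab_mixed n"
    and psd: "psd (2^n) (of_real t \<cdot>\<^sub>m \<sigma> - \<rho>)"
  shows "1 \<le> t"
proof -
  have "mtrace (of_real t \<cdot>\<^sub>m \<sigma> - \<rho>) = of_real t * mtrace \<sigma> - mtrace \<rho>"
    using density_carrier[OF \<rho>] stab_mixed_carrier[OF \<sigma>]
    unfolding mtrace_def by (simp add: sum_subtractf sum_distrib_left)
  also have "\<dots> = of_real (t - 1)"
    using density_trace[OF \<rho>] stab_mixed_trace[OF \<sigma>] by simp
  finally show ?thesis using psd_trace_nonneg[OF psd] by simp
qed

lemma gen_robustness_le:
  assumes "density n \<rho>" "\<sigma> \<in> stab_mixed n" "psd (2^n) (of_real t \<cdot>\<^sub>m \<sigma> - \<rho>)"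
  shows "gen_robustness n \<rho> \<le> t"
  unfolding gen_robustness_def
proof (rule cInf_lower)
  show "t \<in> {t. \<exists>\<sigma>\<in>stab_mixed n. psd (2 ^ n) (of_real t \<cdot>\<^sub>m \<sigma> - \<rho>)}"
    using assms by auto
  show "bdd_below {t. \<exists>\<sigma>\<in>stab_mixed n. psd (2 ^ n) (of_real t \<cdot>\<^sub>m \<sigma> - \<rho>)}"
    using gen_robustness_feasible_ge_1[OF assms(1)] by (auto intro!: bdd_belowI[of _ 1])
qed

lemma real_comb_coeff_sum:
  assumes "density n \<rho>" "F \<subseteq> stab_projs n" "\<rho> = real_comb n F q"
  shows "(\<Sum>P\<in>F. q P) = 1"
  using density_trace[OF assms(1)] mtrace_real_comb[OF assms(2), of q] assms(3)
  by (metis of_real_eq_1_iff)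

lemma sum_abs_eq_positive_part:
  fixes q :: "'a \<Rightarrow> real"
  assumes "finite F" "(\<Sum>x\<in>F. q x) = 1"
  shows "(\<Sum>x\<in>F. \<bar>q x\<bar>) = 2 * (\<Sum>x\<in>{x\<in>F. 0 < q x}. q x) - 1"
proof -
  have pos: "{x\<in>F. 0 < q x} = F \<inter> {x. 0 < q x}" by auto
  have "(\<Sum>x\<in>F. \<bar>q x\<bar>) = (\<Sum>x\<in>F. if 0 < q x then q x else - q x)"
    by (intro sum.cong) auto
  also have "\<dots> = (\<Sum>x\<in>F \<inter> {x. 0 < q x}. q x) - (\<Sum>x\<in>F \<inter> - {x. 0 < q x}. q x)"
    using assms(1) by (simp add: sum.If_cases sum_negf)
  also have "(\<Sum>x\<in>F \<inter> - {x. 0 < q x}. q x) = 1 - (\<Sum>x\<in>F \<inter> {x. 0 < q x}. q x)"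
    using sum.If_cases[OF assms(1), of "\<lambda>x. 0 < q x" q q] assms(2) by simp
  finally show ?thesis unfolding pos by simp
qed

lemma real_comb_normalised_stab_mixed:
  assumes "finite F" "F \<subseteq> stab_projs n" "\<And>P. P \<in> F \<Longrightarrow> 0 \<le> q P" "0 < (\<Sum>P\<in>F. q P)"
  shows "real_comb n F (\<lambda>P. q P / (\<Sum>P\<in>F. q P)) \<in> stab_mixed n"
  unfolding stab_mixed_def using assms
  by (intro CollectI exI[of _ F] exI[of _ "\<lambda>P. q P / (\<Sum>P\<in>F. q P)"] conjI refl)
    (auto simp: sum_divide_distrib[symmetric])

lemma gen_robustness_le_positive_part:
  assumes dens: "density n \<rho>" and F: "finite F" "F \<subseteq> stab_projs n"
    and \<rho>: "\<rho> = real_comb n F q"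
  shows "gen_robustness n \<rho> \<le> (\<Sum>P\<in>{P\<in>F. 0 < q P}. q P)"
proof -
  define Fp where "Fp = {P\<in>F. 0 < q P}"
  define Fm where "Fm = {P\<in>F. \<not> 0 < q P}"
  define p where "p = (\<Sum>P\<in>Fp. q P)"
  have fin: "finite Fp" "finite Fm" using F(1) unfolding Fp_def Fm_def by auto
  have sub: "Fp \<subseteq> stab_projs n" "Fm \<subseteq> stab_projs n" using F(2) unfolding Fp_def Fm_def by auto
  have split: "(\<Sum>P\<in>F. g P) = (\<Sum>P\<in>Fp. g P) + (\<Sum>P\<in>Fm. g P)" for g :: "complex mat \<Rightarrow> 'a::comm_monoid_add"
  proof -
    have "F = Fp \<union> Fm" "Fp \<inter> Fm = {}" unfolding Fp_def Fm_def by auto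
    then show ?thesis using sum.union_disjoint[OF fin] by metis
  qed
  have "(\<Sum>P\<in>Fm. q P) \<le> 0" unfolding Fm_def by (auto intro: sum_nonpos)
  then have p: "0 < p"
    using real_comb_coeff_sum[OF dens F(2) \<rho>] split[of q] unfolding p_def by simp
  define \<sigma> where "\<sigma> = real_comb n Fp (\<lambda>P. q P / p)"
  have "\<sigma> \<in> stab_mixed n"
    using fin(1) sub(1) p unfolding \<sigma>_def p_def Fp_def by (intro real_comb_normalised_stab_mixed) auto
  moreover have "psd (2^n) (of_real p \<cdot>\<^sub>m \<sigma> - \<rho>)"
  proof (rule psd_nonneg_lincomb[where G=Fm and c="\<lambda>P. - q P" and P="\<lambda>P. P"])
    show "of_real p \<cdot>\<^sub>m \<sigma> - \<rho> \<in> carrier_mat (2 ^ n) (2 ^ n)"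
      using density_carrier[OF dens] by (auto simp: \<sigma>_def)
    show "0 \<le> - q P" if "P \<in> Fm" for P using that unfolding Fm_def by auto
    show "psd (2 ^ n) P" if "P \<in> Fm" for P using that sub(2) stab_proj_psd by auto
    fix i j :: nat assume ij: "i < 2^n" "j < 2^n"
    have "of_real p * \<sigma> $$ (i,j) = (\<Sum>P\<in>Fp. of_real (q P) * P $$ (i,j))"
      unfolding \<sigma>_def real_comb_index[OF sub(1) ij] using p by (simp add: sum_distrib_left)
    moreover have "\<rho> $$ (i,j) = (\<Sum>P\<in>Fp. of_real (q P) * P $$ (i,j)) + (\<Sum>P\<in>Fm. of_real (q P) * P $$ (i,j))"
      using \<rho> real_comb_index[OF F(2) ij] split by simp
    ultimately show "(of_real p \<cdot>\<^sub>m \<sigma> - \<rho>) $$ (i,j) = (\<Sum>P\<in>Fm. of_real (- q P) * P $$ (i,j))"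
      using ij density_carrier[OF dens] by (simp add: \<sigma>_def sum_negf)
  qed (use fin in auto)
  ultimately have "gen_robustness n \<rho> \<le> p" by (rule gen_robustness_le[OF dens])
  then show ?thesis unfolding p_def Fp_def .
qed

lemma less_4_iff: "a < (4::nat) \<longleftrightarrow> a = 0 \<or> a = 1 \<or> a = 2 \<or> a = 3" by auto
lemma less_6_iff: "a < (6::nat) \<longleftrightarrow> a = 0 \<or> a = 1 \<or> a = 2 \<or> a = 3 \<or> a = 4 \<or> a = 5" by auto

lemma sum_lessThan_2: "(\<Sum>a<2. f a) = f 0 + f (1::nat)"
  by (simp add: numeral_2_eq_2)

lemma sum_lessThan_4: "(\<Sum>a<4. f a) = f 0 + f 1 + f 2 + f (3::nat)"
  by (simp add: numeral_eq_Suc)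

lemma sum_lessThan_6: "(\<Sum>a<6. f a) = f 0 + f 1 + f 2 + f 3 + f 4 + f (5::nat)"
  by (simp add: numeral_eq_Suc)

definition half_sqrt2 :: complex where "half_sqrt2 = of_real (sqrt 2 / 2)"

lemma half_sqrt2_sq: "half_sqrt2 * half_sqrt2 = 1/2"
proof -
  have "half_sqrt2 * half_sqrt2 = of_real (sqrt 2 * sqrt 2 / 4)"
    unfolding half_sqrt2_def by (simp only: of_real_mult[symmetric]) simp
  then show ?thesis by simp
qed

lemma half_sqrt2_i_sq: "\<i> * half_sqrt2 * \<i> * half_sqrt2 = -1/2"
proof -
  have "\<i> * half_sqrt2 * \<i> * half_sqrt2 = (\<i> * \<i>) * (half_sqrt2 * half_sqrt2)" by (simp only: mult_ac)
  then show ?thesis by (simp add: half_sqrt2_sq)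
qed

lemma cnj_half_sqrt2 [simp]: "cnj half_sqrt2 = half_sqrt2"
  unfolding half_sqrt2_def by simp

lemma cmod_half_sqrt2_sq: "(cmod half_sqrt2)^2 = 1/2"
  unfolding half_sqrt2_def by (simp add: power_divide)

text \<open>Amplitudes of \<open>|0\<rangle>, |1\<rangle>, |+\<rangle>, |+i\<rangle>, |-\<rangle>, |-i\<rangle>\<close>, numbered \<open>0..5\<close>. State \<open>v\<close> is
  stabilized by \<open>stab1_sign v\<close> times the Pauli matrix number \<open>stab1_pauli v\<close>.\<close>
definition stab1_amp :: "nat \<Rightarrow> nat \<Rightarrow> complex" where
  "stab1_amp v b = (if v = 0 then (if b = 0 then 1 else 0)
     else if v = 1 then (if b = 0 then 0 else 1)
     else if v = 2 then half_sqrt2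
     else if v = 3 then (if b = 0 then half_sqrt2 else \<i> * half_sqrt2)
     else if v = 4 then (if b = 0 then half_sqrt2 else - half_sqrt2)
     else (if b = 0 then half_sqrt2 else - \<i> * half_sqrt2))"

definition stab1_pauli :: "nat \<Rightarrow> nat" where
  "stab1_pauli v = (if v \<le> 1 then 3 else if v = 2 \<or> v = 4 then 1 else 2)"

definition stab1_sign :: "nat \<Rightarrow> real" where
  "stab1_sign v = (if v = 1 \<or> v = 4 \<or> v = 5 then -1 else 1)"

definition pauli1_entry :: "nat \<Rightarrow> nat \<Rightarrow> nat \<Rightarrow> complex" where
  "pauli1_entry k a b = (if k = 0 then (if a = b then 1 else 0)
     else if k = 1 then (if a = b then 0 else 1)
     else if k = 2 then (if a = b then 0 else if a = 0 then - \<i> else \<i>)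
     else (if a = b then (if a = 0 then 1 else -1) else 0))"

lemma pauli1_index: "a < 2 \<Longrightarrow> b < 2 \<Longrightarrow> pauli1 k $$ (a,b) = pauli1_entry k a b"
  unfolding pauli1_def pauli1_entry_def mat_of_rows_list_def
  by (cases "a = 0"; cases "b = 0") (auto simp: less_2_cases_iff)

lemma stab1_pauli_range: "stab1_pauli v \<noteq> 0" "stab1_pauli v < 4"
  unfolding stab1_pauli_def by auto

lemma stab1_sign_cases: "stab1_sign v = 1 \<or> stab1_sign v = -1"
  unfolding stab1_sign_def by auto

definition pauli1_act :: "nat \<Rightarrow> nat \<Rightarrow> nat \<Rightarrow> complex" where
  "pauli1_act s v a = (\<Sum>b<2. pauli1 s $$ (a,b) * stab1_amp v b)"

definition stab1_expect :: "nat \<Rightarrow> nat \<Rightarrow> complex" where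
  "stab1_expect s v = (\<Sum>a<2. cnj (stab1_amp v a) * pauli1_act s v a)"

lemma pauli1_act_eq:
  "a < 2 \<Longrightarrow> pauli1_act s v a = pauli1_entry s a 0 * stab1_amp v 0 + pauli1_entry s a 1 * stab1_amp v 1"
  unfolding pauli1_act_def by (simp add: sum_lessThan_2 pauli1_index)

lemma stab1_amp_norm: "v < 6 \<Longrightarrow> (\<Sum>a<2. (cmod (stab1_amp v a))^2) = 1"
  unfolding less_6_iff by (auto simp: sum_lessThan_2 stab1_amp_def cmod_half_sqrt2_sq norm_mult)

lemma pauli1_act_stabilizer:
  "v < 6 \<Longrightarrow> a < 2 \<Longrightarrow> pauli1_act (stab1_pauli v) v a = of_real (stab1_sign v) * stab1_amp v a"
  unfolding less_6_iff less_2_cases_iff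
  by (auto simp: pauli1_act_eq pauli1_entry_def stab1_amp_def stab1_pauli_def stab1_sign_def)

lemma pauli1_act_id: "v < 6 \<Longrightarrow> a < 2 \<Longrightarrow> pauli1_act 0 v a = stab1_amp v a"
  unfolding less_6_iff less_2_cases_iff by (auto simp: pauli1_act_eq pauli1_entry_def stab1_amp_def)

lemma stab1_amp_inner:
  assumes "v < 6" shows "(\<Sum>a<2. cnj (stab1_amp v a) * stab1_amp v a) = 1"
proof -
  have "(\<Sum>a<2. cnj (stab1_amp v a) * stab1_amp v a) = of_real (\<Sum>a<2. (cmod (stab1_amp v a))^2)"
    unfolding of_real_sum complex_norm_square by (simp add: mult.commute)
  then show ?thesis using stab1_amp_norm[OF assms] by simp
qed

lemma stab1_expect_anticommuting:
  "v < 6 \<Longrightarrow> s < 4 \<Longrightarrow> s \<noteq> 0 \<Longrightarrow> s \<noteq> stab1_pauli v \<Longrightarrow> stab1_expect s v = 0"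
  unfolding less_6_iff less_4_iff stab1_expect_def
  by (elim disjE) (simp_all add: sum_lessThan_2 pauli1_act_eq pauli1_entry_def stab1_amp_def
      stab1_pauli_def half_sqrt2_sq half_sqrt2_i_sq ring_distribs mult.assoc[symmetric])

lemma stab1_expect_eq:
  assumes v: "v < 6" and s: "s < 4"
  shows "stab1_expect s v =
    (if s = 0 then 1 else if s = stab1_pauli v then of_real (stab1_sign v) else 0)"
proof -
  have "stab1_expect 0 v = 1"
    using v stab1_amp_inner pauli1_act_id unfolding stab1_expect_def by simp
  moreover have "stab1_expect (stab1_pauli v) v = of_real (stab1_sign v)"
    using v stab1_amp_inner pauli1_act_stabilizer
    unfolding stab1_expect_def by (simp add: mult.left_commute flip: sum_distrib_left)
  ultimately show ?thesis using stab1_expect_anticommuting[OF v s] by auto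
qed

lemma pauli1_hs_inner: "s < 4 \<Longrightarrow> s' < 4 \<Longrightarrow>
  (\<Sum>a<2. \<Sum>b<2. cnj (pauli1 s $$ (a,b)) * pauli1 s' $$ (a,b)) = (if s = s' then 2 else 0)"
  unfolding less_4_iff by (auto simp: sum_lessThan_2 pauli1_index pauli1_entry_def)

definition matrix_unit_coeff :: "nat \<Rightarrow> nat \<Rightarrow> nat \<Rightarrow> complex" where
  "matrix_unit_coeff a b v = (if a = b then (if v = 0 then (if a = 0 then 1 else 0)
       else if v = 1 then (if a = 0 then 0 else 1) else 0)
     else if a = 0 then (if v \<le> 1 then - (1 + \<i>)/2 else if v = 2 then 1 else \<i>)
     else (if v \<le> 1 then - (1 - \<i>)/2 else if v = 2 then 1 else - \<i>))"

lemma matrix_unit_stab1_expansion: "a < 2 \<Longrightarrow> b < 2 \<Longrightarrow> x < 2 \<Longrightarrow> y < 2 \<Longrightarrow>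
  (if x = a \<and> y = b then 1 else 0) =
    (\<Sum>v<4. matrix_unit_coeff a b v * (stab1_amp v x * cnj (stab1_amp v y)))"
  unfolding less_2_cases_iff
  by (auto simp: sum_lessThan_4 matrix_unit_coeff_def stab1_amp_def algebra_simps half_sqrt2_sq)
    (simp_all add: field_simps)

section \<open>Product stabilizer states\<close>

lemma sum_lessThan_double: "(\<Sum>j<(m::nat)+m. F j) = (\<Sum>j<m. F j) + (\<Sum>j<m. F (j+m))"
proof -
  have split: "{..<m+m} = {..<m} \<union> {m..<m+m}" by auto
  have "(\<Sum>j\<in>{m..<m+m}. F j) = (\<Sum>j\<in>{0+m..<m+m}. F j)" by simp
  also have "\<dots> = (\<Sum>j\<in>{0..<m}. F (j+m))" by (rule sum.shift_bounds_nat_ivl)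
  finally show ?thesis unfolding split by (subst sum.union_disjoint) (auto simp: atLeast0LessThan)
qed

lemma digit_add_pow2_low:
  assumes "k < n" shows "((j::nat) + 2^n) div 2^k mod 2 = j div 2^k mod 2"
proof -
  have "(2::nat)^n = 2^k * 2^(n-k)" using assms by (simp add: power_add[symmetric])
  then have "(j + 2^n) div 2^k = j div 2^k + 2^(n-k)" by simp
  moreover have "even ((2::nat)^(n-k))" using assms by simp
  then obtain c where "(2::nat)^(n-k) = 2 * c" by blast
  ultimately show ?thesis by simp
qed

lemma sum_pow2_prod_digits:
  fixes g :: "nat \<Rightarrow> nat \<Rightarrow> 'a::comm_semiring_1"
  shows "(\<Sum>j<2^n. \<Prod>k<n. g k (j div 2^k mod 2)) = (\<Prod>k<n. \<Sum>b<2. g k b)"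
proof (induction n)
  case 0 then show ?case by simp
next
  case (Suc n)
  have low: "(\<Prod>k<n. g k ((j + 2^n) div 2^k mod 2)) = (\<Prod>k<n. g k (j div 2^k mod 2))" for j
    by (intro prod.cong refl) (simp add: digit_add_pow2_low)
  have "(\<Sum>j<2^Suc n. \<Prod>k<Suc n. g k (j div 2^k mod 2))
     = (\<Sum>j<2^n. \<Prod>k<Suc n. g k (j div 2^k mod 2)) + (\<Sum>j<2^n. \<Prod>k<Suc n. g k ((j + 2^n) div 2^k mod 2))"
    using sum_lessThan_double[of "\<lambda>j. \<Prod>k<Suc n. g k (j div 2^k mod 2)" "2^n"] by (simp add: mult_2)
  also have "\<dots> = (\<Sum>j<2^n. (\<Prod>k<n. g k (j div 2^k mod 2)) * g n 0)
      + (\<Sum>j<2^n. (\<Prod>k<n. g k (j div 2^k mod 2)) * g n 1)"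
    by (intro arg_cong2[where f="(+)"] sum.cong refl) (simp_all add: low div_add_self2)
  finally show ?case using Suc by (simp add: sum_distrib_right[symmetric] sum_lessThan_2 distrib_left)
qed

lemma nat_eq_if_digits_eq:
  "(i::nat) < 2^n \<Longrightarrow> x < 2^n \<Longrightarrow> (\<And>k. k < n \<Longrightarrow> i div 2^k mod 2 = x div 2^k mod 2) \<Longrightarrow> i = x"
proof (induction n arbitrary: i x)
  case 0 then show ?case by simp
next
  case (Suc n)
  have "i div 2 = x div 2"
  proof (rule Suc.IH)
    show "i div 2 < 2^n" "x div 2 < 2^n" using Suc.prems(1,2) by auto
    show "i div 2 div 2 ^ k mod 2 = x div 2 div 2 ^ k mod 2" if "k < n" for k
      using that Suc.prems(3)[of "Suc k"] by (simp add: div_mult2_eq)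
  qed
  moreover have "i mod 2 = x mod 2" using Suc.prems(3)[of 0] by simp
  ultimately show ?case by (metis div_mult_mod_eq)
qed

definition product_state :: "nat \<Rightarrow> (nat \<Rightarrow> nat) \<Rightarrow> complex vec" where
  "product_state n f = vec (2^n) (\<lambda>i. \<Prod>k<n. stab1_amp (f k) (i div 2^k mod 2))"

lemma product_state_carrier: "product_state n f \<in> carrier_vec (2^n)"
  unfolding product_state_def by simp

lemma product_state_index:
  "i < 2^n \<Longrightarrow> product_state n f $ i = (\<Prod>k<n. stab1_amp (f k) (i div 2^k mod 2))"
  unfolding product_state_def by simp

lemma pauli_string_index: "i < 2^n \<Longrightarrow> j < 2^n \<Longrightarrow>
   pauli_string n s $$ (i,j) = (\<Prod>k<n. pauli1 (s k) $$ (i div 2^k mod 2, j div 2^k mod 2))"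
  unfolding pauli_string_def by simp

lemma pauli_string_dims [simp]:
  "dim_row (pauli_string n s) = 2^n" "dim_col (pauli_string n s) = 2^n"
  unfolding pauli_string_def by simp_all

lemma pauli_string_cong: "(\<And>k. k < n \<Longrightarrow> s k = s' k) \<Longrightarrow> pauli_string n s = pauli_string n s'"
  unfolding pauli_string_def by (intro cong[OF refl, where f="mat (2^n) (2^n)"] ext) auto

lemma smult_mult_mat_vec_index:
  "i < dim_row M \<Longrightarrow> dim_col M = dim_vec v \<Longrightarrow> ((a \<cdot>\<^sub>m M) *\<^sub>v v) $ i = a * (M *\<^sub>v v) $ i"
  by (simp add: scalar_prod_def sum_distrib_left mult.assoc)

lemma pauli_string_mult_product_state:
  assumes "i < 2^n"
  shows "(pauli_string n s *\<^sub>v product_state n f) $ i = (\<Prod>k<n. pauli1_act (s k) (f k) (i div 2^k mod 2))"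
proof -
  have "(pauli_string n s *\<^sub>v product_state n f) $ i = row (pauli_string n s) i \<bullet> product_state n f"
    using assms by simp
  also have "\<dots> = (\<Sum>j<2^n. pauli_string n s $$ (i,j) * product_state n f $ j)"
    unfolding scalar_prod_def using assms by (intro sum.cong) (auto simp: product_state_def)
  also have "\<dots> = (\<Sum>j<2^n. \<Prod>k<n. pauli1 (s k) $$ (i div 2^k mod 2, j div 2^k mod 2)
      * stab1_amp (f k) (j div 2^k mod 2))"
    using assms by (intro sum.cong refl) (simp add: pauli_string_index product_state_index prod.distrib)
  also have "\<dots> = (\<Prod>k<n. pauli1_act (s k) (f k) (i div 2^k mod 2))"
    unfolding pauli1_act_def by (rule sum_pow2_prod_digits)
  finally show ?thesis .
qed

lemma product_state_pauli_expect:
  "(\<Sum>i<2^n. cnj (product_state n f $ i) * (pauli_string n s *\<^sub>v product_state n f) $ i)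
    = (\<Prod>k<n. stab1_expect (s k) (f k))"
proof -
  have "(\<Sum>i<2^n. cnj (product_state n f $ i) * (pauli_string n s *\<^sub>v product_state n f) $ i)
     = (\<Sum>i<2^n. \<Prod>k<n. cnj (stab1_amp (f k) (i div 2^k mod 2)) * pauli1_act (s k) (f k) (i div 2^k mod 2))"
    by (intro sum.cong refl)
      (simp only: lessThan_iff pauli_string_mult_product_state product_state_index cnj_prod prod.distrib)
  also have "\<dots> = (\<Prod>k<n. stab1_expect (s k) (f k))"
    unfolding stab1_expect_def by (rule sum_pow2_prod_digits)
  finally show ?thesis .
qed

lemma product_state_norm:
  assumes "\<And>k. k < n \<Longrightarrow> f k < 6"
  shows "(\<Sum>i<2^n. (cmod (product_state n f $ i))^2) = 1"
proof -
  have "(\<Sum>i<2^n. (cmod (product_state n f $ i))^2)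
      = (\<Sum>i<2^n. \<Prod>k<n. (cmod (stab1_amp (f k) (i div 2^k mod 2)))^2)"
    by (intro sum.cong refl) (simp add: product_state_index prod_norm[symmetric] prod_power_distrib)
  also have "\<dots> = (\<Prod>k<n. \<Sum>a<2. (cmod (stab1_amp (f k) a))^2)" by (rule sum_pow2_prod_digits)
  also have "\<dots> = 1" using assms stab1_amp_norm by (intro prod.neutral) auto
  finally show ?thesis .
qed

lemma product_state_inner_self:
  assumes "\<And>k. k < n \<Longrightarrow> f k < 6"
  shows "(\<Sum>i<2^n. cnj (product_state n f $ i) * product_state n f $ i) = 1"
proof -
  have "(\<Sum>i<2^n. cnj (product_state n f $ i) * product_state n f $ i)
      = of_real (\<Sum>i<2^n. (cmod (product_state n f $ i))^2)"
    unfolding of_real_sum complex_norm_square by (simp add: mult.commute)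
  then show ?thesis using product_state_norm[OF assms] by simp
qed

text \<open>The \<open>2^n\<close> stabilizers of \<open>product_state n f\<close>: products of the single-qubit
  stabilizers of the factors \<open>k \<in> T\<close>, for \<open>T \<subseteq> {..<n}\<close>.\<close>
definition prod_stab_string :: "(nat \<Rightarrow> nat) \<Rightarrow> nat set \<Rightarrow> nat \<Rightarrow> nat" where
  "prod_stab_string f T k = (if k \<in> T then stab1_pauli (f k) else 0)"

definition prod_stab_sign :: "nat \<Rightarrow> (nat \<Rightarrow> nat) \<Rightarrow> nat set \<Rightarrow> real" where
  "prod_stab_sign n f T = (\<Prod>k<n. if k \<in> T then stab1_sign (f k) else 1)"

definition prod_stab :: "nat \<Rightarrow> (nat \<Rightarrow> nat) \<Rightarrow> nat set \<Rightarrow> complex mat" where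
  "prod_stab n f T = of_real (prod_stab_sign n f T) \<cdot>\<^sub>m pauli_string n (prod_stab_string f T)"

lemma prod_stab_sign_cases: "prod_stab_sign n f T = 1 \<or> prod_stab_sign n f T = -1"
proof (induction n)
  case 0 then show ?case by (simp add: prod_stab_sign_def)
next
  case (Suc n)
  then show ?case using stab1_sign_cases[of "f n"] by (auto simp: prod_stab_sign_def)
qed

lemma prod_stab_expect:
  assumes "\<And>k. k < n \<Longrightarrow> f k < 6"
  shows "(\<Prod>k<n. stab1_expect (prod_stab_string f T k) (f k)) = of_real (prod_stab_sign n f T)"
  unfolding prod_stab_sign_def of_real_prod using assms
  by (intro prod.cong refl) (auto simp: prod_stab_string_def stab1_expect_eq stab1_pauli_range)

lemma prod_stab_mult_product_state:
  assumes f: "\<And>k. k < n \<Longrightarrow> f k < 6" and i: "i < 2^n"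
  shows "(pauli_string n (prod_stab_string f T) *\<^sub>v product_state n f) $ i
    = of_real (prod_stab_sign n f T) * product_state n f $ i"
proof -
  have "pauli1_act (prod_stab_string f T k) (f k) (i div 2^k mod 2)
      = of_real (if k \<in> T then stab1_sign (f k) else 1) * stab1_amp (f k) (i div 2^k mod 2)"
    if "k < n" for k
    using f[OF that] pauli1_act_stabilizer pauli1_act_id unfolding prod_stab_string_def by auto
  then show ?thesis
    unfolding pauli_string_mult_product_state[OF i] product_state_index[OF i] prod_stab_sign_def
    by (simp add: prod.distrib of_real_prod)
qed

lemma prod_stab_mem_stab_group:
  assumes f: "\<And>k. k < n \<Longrightarrow> f k < 6"
  shows "prod_stab n f T \<in> stab_group n (product_state n f)"
  unfolding stab_group_def
proof (intro CollectI conjI)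
  have "\<forall>k<n. prod_stab_string f T k < 4" using stab1_pauli_range by (simp add: prod_stab_string_def)
  then show "prod_stab n f T \<in> signed_paulis n"
    unfolding signed_paulis_def prod_stab_def using prod_stab_sign_cases[of n f T] by blast
  show "prod_stab n f T *\<^sub>v product_state n f = product_state n f"
  proof (rule eq_vecI)
    fix i assume "i < dim_vec (product_state n f)"
    then have i: "i < 2^n" by (simp add: product_state_def)
    have "(prod_stab n f T *\<^sub>v product_state n f) $ i
        = of_real (prod_stab_sign n f T) * (pauli_string n (prod_stab_string f T) *\<^sub>v product_state n f) $ i"
      unfolding prod_stab_def using i by (intro smult_mult_mat_vec_index) (auto simp: product_state_def)
    also have "\<dots> = of_real (prod_stab_sign n f T * prod_stab_sign n f T) * product_state n f $ i"
      by (simp only: prod_stab_mult_product_state[OF f i] of_real_mult mult.assoc)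
    finally show "(prod_stab n f T *\<^sub>v product_state n f) $ i = product_state n f $ i"
      using prod_stab_sign_cases[of n f T] by auto
  qed (simp add: prod_stab_def product_state_def)
qed

lemma stabilizing_signed_pauli_expect:
  assumes \<psi>: "\<psi> \<in> carrier_vec (2^n)" and stab: "(of_real \<sigma> \<cdot>\<^sub>m pauli_string n s) *\<^sub>v \<psi> = \<psi>"
  shows "of_real \<sigma> * (\<Sum>i<2^n. cnj (\<psi> $ i) * (pauli_string n s *\<^sub>v \<psi>) $ i)
    = (\<Sum>i<2^n. cnj (\<psi> $ i) * \<psi> $ i)"
proof -
  have entry: "of_real \<sigma> * (pauli_string n s *\<^sub>v \<psi>) $ i = \<psi> $ i" if "i < 2^n" for i
    using arg_cong[OF stab, of "\<lambda>v. v $ i"] smult_mult_mat_vec_index[of i] that \<psi> by simp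
  have "of_real \<sigma> * (\<Sum>i<2^n. cnj (\<psi> $ i) * (pauli_string n s *\<^sub>v \<psi>) $ i)
      = (\<Sum>i<2^n. cnj (\<psi> $ i) * (of_real \<sigma> * (pauli_string n s *\<^sub>v \<psi>) $ i))"
    by (simp only: sum_distrib_left mult.left_commute)
  also have "\<dots> = (\<Sum>i<2^n. cnj (\<psi> $ i) * \<psi> $ i)"
    by (intro sum.cong refl) (simp add: entry del: index_mult_mat_vec)
  finally show ?thesis .
qed

lemma stab_group_product_state_subset:
  assumes f: "\<And>k. k < n \<Longrightarrow> f k < 6"
  shows "stab_group n (product_state n f) \<subseteq> prod_stab n f ` Pow {..<n}"
proof
  fix P assume "P \<in> stab_group n (product_state n f)"
  then obtain \<sigma> s where P: "P = of_real \<sigma> \<cdot>\<^sub>m pauli_string n s" and \<sigma>: "\<sigma> = 1 \<or> \<sigma> = -1"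
    and s: "\<And>k. k < n \<Longrightarrow> s k < 4" and stab: "P *\<^sub>v product_state n f = product_state n f"
    unfolding stab_group_def signed_paulis_def by blast
  have key: "of_real \<sigma> * (\<Prod>k<n. stab1_expect (s k) (f k)) = 1"
    using stabilizing_signed_pauli_expect[OF product_state_carrier stab[unfolded P]]
      product_state_inner_self[of n f, OF f]
    by (simp only: product_state_pauli_expect)
  have s_cases: "s k = 0 \<or> s k = stab1_pauli (f k)" if k: "k < n" for k
  proof (rule ccontr)
    assume "\<not> ?thesis"
    then have "stab1_expect (s k) (f k) = 0" using stab1_expect_eq[OF f[OF k] s[OF k]] by auto
    then have "(\<Prod>k<n. stab1_expect (s k) (f k)) = 0" using k by (intro prod_zero) auto
    then show False using key by (metis mult_zero_right zero_neq_one)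
  qed
  define T where "T = {k. k < n \<and> s k \<noteq> 0}"
  have s_eq: "s k = prod_stab_string f T k" if "k < n" for k
    using that s_cases[OF that] stab1_pauli_range unfolding prod_stab_string_def T_def by auto
  have "(\<Prod>k<n. stab1_expect (s k) (f k)) = of_real (prod_stab_sign n f T)"
    using prod_stab_expect[of n f T, OF f] s_eq by (metis (no_types, lifting) lessThan_iff prod.cong)
  then have "\<sigma> = prod_stab_sign n f T"
    using key \<sigma> prod_stab_sign_cases[of n f T] by (auto simp flip: of_real_mult)
  then have "P = prod_stab n f T" unfolding P prod_stab_def using pauli_string_cong[OF s_eq] by simp
  moreover have "T \<in> Pow {..<n}" unfolding T_def by auto
  ultimately show "P \<in> prod_stab n f ` Pow {..<n}" by blast
qed

lemma pauli_string_hs_inner: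
  assumes "\<And>k. k < n \<Longrightarrow> s k < 4" "\<And>k. k < n \<Longrightarrow> s' k < 4"
  shows "(\<Sum>i<2^n. \<Sum>j<2^n. cnj (pauli_string n s $$ (i,j)) * pauli_string n s' $$ (i,j))
     = (\<Prod>k<n. if s k = s' k then 2 else 0)"
proof -
  define h where "h k a b = cnj (pauli1 (s k) $$ (a,b)) * pauli1 (s' k) $$ (a,b)" for k a b
  have "(\<Sum>i<2^n. \<Sum>j<2^n. cnj (pauli_string n s $$ (i,j)) * pauli_string n s' $$ (i,j))
     = (\<Sum>i<2^n. \<Sum>j<2^n. \<Prod>k<n. h k (i div 2^k mod 2) (j div 2^k mod 2))"
    unfolding h_def by (intro sum.cong refl) (simp add: pauli_string_index prod.distrib)
  also have "\<dots> = (\<Sum>i<2^n. \<Prod>k<n. \<Sum>b<2. h k (i div 2^k mod 2) b)"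
    by (intro sum.cong refl) (rule sum_pow2_prod_digits)
  also have "\<dots> = (\<Prod>k<n. \<Sum>a<2. \<Sum>b<2. h k a b)"
    by (rule sum_pow2_prod_digits)
  also have "\<dots> = (\<Prod>k<n. if s k = s' k then 2 else 0)"
    unfolding h_def using assms pauli1_hs_inner by (intro prod.cong refl) auto
  finally show ?thesis .
qed

text \<open>Pauli strings are orthogonal for the Hilbert-Schmidt inner product.\<close>
lemma signed_pauli_string_eqD:
  assumes eq: "of_real \<sigma> \<cdot>\<^sub>m pauli_string n s = of_real \<sigma>' \<cdot>\<^sub>m pauli_string n s'" and "\<sigma> \<noteq> 0"
    and s: "\<And>k. k < n \<Longrightarrow> s k < 4" and s': "\<And>k. k < n \<Longrightarrow> s' k < 4" and k: "k < n"
  shows "s k = s' k"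
proof (rule ccontr)
  assume ne: "s k \<noteq> s' k"
  define H where "H M = (\<Sum>i<2^n. \<Sum>j<2^n. cnj (pauli_string n s $$ (i,j)) * M $$ (i,j))" for M
  have H_smult: "H (of_real c \<cdot>\<^sub>m pauli_string n t) = of_real c * H (pauli_string n t)" for c t
  proof -
    have "H (of_real c \<cdot>\<^sub>m pauli_string n t)
        = (\<Sum>i<2^n. \<Sum>j<2^n. of_real c * (cnj (pauli_string n s $$ (i,j)) * pauli_string n t $$ (i,j)))"
      unfolding H_def by (intro sum.cong refl) (simp add: mult.left_commute)
    then show ?thesis unfolding H_def by (simp add: sum_distrib_left)
  qed
  have "H (pauli_string n s) = 2^n"
    using pauli_string_hs_inner[OF s s] unfolding H_def by simp
  moreover have "H (pauli_string n s') = 0"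
    using pauli_string_hs_inner[OF s s'] ne k unfolding H_def by (auto intro: prod_zero)
  ultimately have "of_real \<sigma> * 2^n = (0::complex)"
    using arg_cong[OF eq, of H] H_smult by simp
  then show False using \<open>\<sigma> \<noteq> 0\<close> by simp
qed

lemma prod_stab_inj_on: "inj_on (prod_stab n f) (Pow {..<n})"
proof (rule inj_onI)
  fix T1 T2 assume T: "T1 \<in> Pow {..<n}" "T2 \<in> Pow {..<n}" and eq: "prod_stab n f T1 = prod_stab n f T2"
  have "prod_stab_string f T1 k = prod_stab_string f T2 k" if "k < n" for k
  proof (rule signed_pauli_string_eqD[OF eq[unfolded prod_stab_def] _ _ _ that])
    show "prod_stab_sign n f T1 \<noteq> 0" using prod_stab_sign_cases[of n f T1] by auto
  qed (use stab1_pauli_range in \<open>auto simp: prod_stab_string_def\<close>)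
  then have "k \<in> T1 \<longleftrightarrow> k \<in> T2" if "k < n" for k
    using that stab1_pauli_range(1)[of "f k"] unfolding prod_stab_string_def by metis
  then show "T1 = T2" using T by blast
qed

lemma product_state_stabilizer:
  assumes f: "\<And>k. k < n \<Longrightarrow> f k < 6"
  shows "stabilizer_state n (product_state n f)"
proof -
  have "stab_group n (product_state n f) = prod_stab n f ` Pow {..<n}"
    using stab_group_product_state_subset[of n f, OF f] prod_stab_mem_stab_group[of n f, OF f] by blast
  then have "card (stab_group n (product_state n f)) = 2^n"
    by (simp add: card_image[OF prod_stab_inj_on] card_Pow)
  then show ?thesis
    unfolding stabilizer_state_def using product_state_carrier product_state_norm[OF f] by simp
qed

section \<open>Stabilizer projectors span the Hermitian matrices\<close>

lemma outer_product_state_index: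
  "i < 2^n \<Longrightarrow> j < 2^n \<Longrightarrow> outer (product_state n f) $$ (i,j)
    = (\<Prod>k<n. stab1_amp (f k) (i div 2^k mod 2) * cnj (stab1_amp (f k) (j div 2^k mod 2)))"
  by (simp add: outer_def product_state_def prod.distrib)

lemma matrix_unit_digits:
  fixes i j x y :: nat
  assumes "i < 2^n" "j < 2^n" "x < 2^n" "y < 2^n"
  shows "(if i = x \<and> j = y then 1 else 0 :: complex) =
    (\<Prod>k<n. if i div 2^k mod 2 = x div 2^k mod 2 \<and> j div 2^k mod 2 = y div 2^k mod 2 then 1 else 0)"
proof (cases "i = x \<and> j = y")
  case False
  then obtain k where "k < n"
    "\<not> (i div 2^k mod 2 = x div 2^k mod 2 \<and> j div 2^k mod 2 = y div 2^k mod 2)"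
    using nat_eq_if_digits_eq[of i n x] nat_eq_if_digits_eq[of j n y] assms by blast
  then have "(\<Prod>k<n. if i div 2^k mod 2 = x div 2^k mod 2 \<and> j div 2^k mod 2 = y div 2^k mod 2
      then 1 else 0 :: complex) = 0"
    by (intro prod_zero) auto
  then show ?thesis using False by simp
qed simp

lemma matrix_unit_expansion:
  assumes ij: "i < 2^n" "j < 2^n" and xy: "x < 2^n" "y < 2^n"
  shows "(if i = x \<and> j = y then 1 else 0) = (\<Sum>f\<in>PiE {..<n} (\<lambda>_. {..<4}).
    (\<Prod>k<n. matrix_unit_coeff (x div 2^k mod 2) (y div 2^k mod 2) (f k)) * outer (product_state n f) $$ (i,j))"
proof -
  have "(if i = x \<and> j = y then 1 else 0) = (\<Prod>k<n. \<Sum>v<4. matrix_unit_coeff (x div 2^k mod 2) (y div 2^k mod 2) v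
      * (stab1_amp v (i div 2^k mod 2) * cnj (stab1_amp v (j div 2^k mod 2))))"
    unfolding matrix_unit_digits[OF ij xy] by (intro prod.cong refl matrix_unit_stab1_expansion) auto
  also have "\<dots> = (\<Sum>f\<in>PiE {..<n} (\<lambda>_. {..<4}). \<Prod>k<n. matrix_unit_coeff (x div 2^k mod 2) (y div 2^k mod 2) (f k)
      * (stab1_amp (f k) (i div 2^k mod 2) * cnj (stab1_amp (f k) (j div 2^k mod 2))))"
    by (rule prod_sum_PiE) auto
  also have "\<dots> = (\<Sum>f\<in>PiE {..<n} (\<lambda>_. {..<4}).
      (\<Prod>k<n. matrix_unit_coeff (x div 2^k mod 2) (y div 2^k mod 2) (f k)) * outer (product_state n f) $$ (i,j))"
    by (intro sum.cong refl) (simp add: outer_product_state_index[OF ij] prod.distrib)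
  finally show ?thesis .
qed

lemma mat_index_product_state_expansion:
  fixes A :: "complex mat"
  assumes ij: "i < 2^n" "j < 2^n"
  shows "A $$ (i,j) = (\<Sum>f\<in>PiE {..<n} (\<lambda>_. {..<4}).
     (\<Sum>x<2^n. \<Sum>y<2^n. A $$ (x,y) * (\<Prod>k<n. matrix_unit_coeff (x div 2^k mod 2) (y div 2^k mod 2) (f k)))
       * outer (product_state n f) $$ (i,j))"
proof -
  let ?\<Phi> = "PiE {..<n} (\<lambda>_. {..<4::nat})"
  let ?c = "\<lambda>x y f. \<Prod>k<n. matrix_unit_coeff (x div 2^k mod 2) (y div 2^k mod 2) (f k)"
  have "(\<Sum>y<2^n. A $$ (x,y) * (if i = x \<and> j = y then 1 else 0)) = (if x = i then A $$ (i,j) else 0)"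
    for x
  proof -
    have "(\<Sum>y<2^n. A $$ (x,y) * (if i = x \<and> j = y then 1 else 0))
        = (\<Sum>y<2^n. if y = j then (if x = i then A $$ (i,j) else 0) else 0)"
      by (intro sum.cong refl) auto
    then show ?thesis using ij by (simp add: sum.delta)
  qed
  then have "A $$ (i,j) = (\<Sum>x<2^n. \<Sum>y<2^n. A $$ (x,y) * (if i = x \<and> j = y then 1 else 0))"
    using ij by (simp add: sum.delta)
  also have "\<dots> = (\<Sum>x<2^n. \<Sum>y<2^n. \<Sum>f\<in>?\<Phi>. A $$ (x,y) * ?c x y f * outer (product_state n f) $$ (i,j))"
    by (intro sum.cong refl) (simp add: matrix_unit_expansion[OF ij] sum_distrib_left mult.assoc)
  also have "\<dots> = (\<Sum>f\<in>?\<Phi>. \<Sum>x<2^n. \<Sum>y<2^n. A $$ (x,y) * ?c x y f * outer (product_state n f) $$ (i,j))"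
    by (subst sum.swap) (simp add: sum.swap[of _ ?\<Phi>])
  also have "\<dots> = (\<Sum>f\<in>?\<Phi>. (\<Sum>x<2^n. \<Sum>y<2^n. A $$ (x,y) * ?c x y f) * outer (product_state n f) $$ (i,j))"
    by (simp add: sum_distrib_right)
  finally show ?thesis .
qed

lemma real_comb_image_index:
  assumes V: "finite V" and Q: "\<And>v. v \<in> V \<Longrightarrow> Q v \<in> stab_projs n" and ij: "i < 2^n" "j < 2^n"
  shows "real_comb n (Q ` V) (\<lambda>P. \<Sum>v\<in>{v\<in>V. Q v = P}. w v) $$ (i,j) = (\<Sum>v\<in>V. of_real (w v) * Q v $$ (i,j))"
proof -
  have "real_comb n (Q ` V) (\<lambda>P. \<Sum>v\<in>{v\<in>V. Q v = P}. w v) $$ (i,j)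
      = (\<Sum>P\<in>Q ` V. \<Sum>v\<in>{v\<in>V. Q v = P}. of_real (w v) * Q v $$ (i,j))"
    using Q by (subst real_comb_index[OF _ ij]) (auto simp: of_real_sum sum_distrib_right intro!: sum.cong)
  also have "\<dots> = (\<Sum>v\<in>V. of_real (w v) * Q v $$ (i,j))"
    by (rule sum.image_gen[OF V, symmetric])
  finally show ?thesis .
qed

lemma real_comb_image_eq:
  assumes "finite V" "\<And>v. v \<in> V \<Longrightarrow> Q v \<in> stab_projs n" "A \<in> carrier_mat (2^n) (2^n)"
    and "\<And>i j. i < 2^n \<Longrightarrow> j < 2^n \<Longrightarrow> A $$ (i,j) = (\<Sum>v\<in>V. of_real (w v) * Q v $$ (i,j))"
  shows "A = real_comb n (Q ` V) (\<lambda>P. \<Sum>v\<in>{v\<in>V. Q v = P}. w v)"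
  by (rule eq_matI) (use assms real_comb_image_index[OF assms(1,2)] in auto)

text \<open>Average the expansion with its adjoint.\<close>
lemma hermitian_lincomb_Re:
  assumes A: "\<And>i j. i < d \<Longrightarrow> j < d \<Longrightarrow> A $$ (j,i) = cnj (A $$ (i,j))"
    and P: "\<And>x i j. i < d \<Longrightarrow> j < d \<Longrightarrow> P x $$ (j,i) = cnj (P x $$ (i,j))"
    and ent: "\<And>i j. i < d \<Longrightarrow> j < d \<Longrightarrow> A $$ (i,j) = (\<Sum>x\<in>G. c x * P x $$ (i,j))"
    and ij: "i < d" "j < d"
  shows "A $$ (i,j) = (\<Sum>x\<in>G. of_real (Re (c x)) * P x $$ (i,j))"
proof -
  have adj: "A $$ (i,j) = (\<Sum>x\<in>G. cnj (c x) * P x $$ (i,j))"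
    using A[OF ij(2,1)] ent[OF ij(2,1)] by (simp add: cnj_sum P[OF ij])
  have "2 * A $$ (i,j) = (\<Sum>x\<in>G. c x * P x $$ (i,j)) + (\<Sum>x\<in>G. cnj (c x) * P x $$ (i,j))"
    using ent[OF ij] adj by simp
  also have "\<dots> = (\<Sum>x\<in>G. (c x + cnj (c x)) * P x $$ (i,j))"
    by (simp add: sum.distrib[symmetric] ring_distribs)
  also have "\<dots> = 2 * (\<Sum>x\<in>G. of_real (Re (c x)) * P x $$ (i,j))"
    by (simp add: complex_add_cnj sum_distrib_left mult.assoc)
  finally show ?thesis by simp
qed

lemma hermitian_stab_decomposition:
  assumes A: "A \<in> carrier_mat (2^n) (2^n)" "dagger A = A"
  shows "\<exists>F q. finite F \<and> F \<subseteq> stab_projs n \<and> A = real_comb n F q"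
proof -
  let ?\<Phi> = "PiE {..<n} (\<lambda>_. {..<4::nat})"
  let ?Q = "\<lambda>f. outer (product_state n f)"
  define a where "a f = (\<Sum>x<2^n. \<Sum>y<2^n. A $$ (x,y) *
      (\<Prod>k<n. matrix_unit_coeff (x div 2^k mod 2) (y div 2^k mod 2) (f k)))" for f
  have fin: "finite ?\<Phi>" by (simp add: finite_PiE)
  have Q: "?Q f \<in> stab_projs n" if "f \<in> ?\<Phi>" for f
  proof -
    have "f k < 6" if "k < n" for k using \<open>f \<in> ?\<Phi>\<close> that by (auto simp: PiE_def Pi_def)
    then show ?thesis unfolding stab_projs_def using product_state_stabilizer by blast
  qed
  have ent: "A $$ (i,j) = (\<Sum>f\<in>?\<Phi>. of_real (Re (a f)) * ?Q f $$ (i,j))" if "i < 2^n" "j < 2^n" for i j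
  proof (rule hermitian_lincomb_Re[OF _ _ _ that])
    show "A $$ (j,i) = cnj (A $$ (i,j))" if "i < 2^n" "j < 2^n" for i j
      by (rule hermitian_index[OF A that])
    show "?Q f $$ (j,i) = cnj (?Q f $$ (i,j))" if "i < 2^n" "j < 2^n" for f i j
      using that by (simp add: outer_def product_state_def)
    show "A $$ (i,j) = (\<Sum>f\<in>?\<Phi>. a f * ?Q f $$ (i,j))" if "i < 2^n" "j < 2^n" for i j
      unfolding a_def by (rule mat_index_product_state_expansion[OF that])
  qed
  have decomp: "A = real_comb n (?Q ` ?\<Phi>) (\<lambda>P. \<Sum>f\<in>{f\<in>?\<Phi>. ?Q f = P}. Re (a f))"
  proof (rule real_comb_image_eq[where V = ?\<Phi> and Q = ?Q])
    show "?Q f \<in> stab_projs n" if "f \<in> ?\<Phi>" for f by (rule Q[OF that])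
    show "A $$ (i,j) = (\<Sum>f\<in>?\<Phi>. of_real (Re (a f)) * ?Q f $$ (i,j))" if "i < 2^n" "j < 2^n" for i j
      by (rule ent[OF that])
  qed (use fin A(1) in auto)
  show ?thesis
  proof (intro exI conjI)
    show "finite (?Q ` ?\<Phi>)" using fin by simp
    show "?Q ` ?\<Phi> \<subseteq> stab_projs n" using Q by blast
  qed (fact decomp)
qed

lemma robustness_geI:
  assumes \<rho>: "density n \<rho>"
    and bound: "\<And>F q. finite F \<Longrightarrow> F \<subseteq> stab_projs n \<Longrightarrow> \<rho> = real_comb n F q \<Longrightarrow> c \<le> (\<Sum>P\<in>F. \<bar>q P\<bar>)"
  shows "c \<le> robustness n \<rho>"
  unfolding robustness_def
proof (rule cInf_greatest)
  show "{\<Sum>P\<in>F. \<bar>q P\<bar> |F q. finite F \<and> F \<subseteq> stab_projs n \<and> \<rho> = real_comb n F q} \<noteq> {}"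
    using hermitian_stab_decomposition[OF density_carrier[OF \<rho>]] density_psd[OF \<rho>] unfolding psd_def by blast
qed (use bound in blast)

theorem robustness_ge_gen_robustness:
  assumes \<rho>: "density n \<rho>"
  shows "2 * gen_robustness n \<rho> - 1 \<le> robustness n \<rho>"
proof (rule robustness_geI[OF \<rho>])
  fix F q assume F: "finite F" "F \<subseteq> stab_projs n" and decomp: "\<rho> = real_comb n F q"
  have "(\<Sum>P\<in>F. \<bar>q P\<bar>) = 2 * (\<Sum>P\<in>{P\<in>F. 0 < q P}. q P) - 1"
    using sum_abs_eq_positive_part[OF F(1) real_comb_coeff_sum[OF \<rho> F(2) decomp]] .
  then show "2 * gen_robustness n \<rho> - 1 \<le> (\<Sum>P\<in>F. \<bar>q P\<bar>)"
    using gen_robustness_le_positive_part[OF \<rho> F decomp] by linarith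
qed

section \<open>One qubit: Bloch coordinates\<close>

lemma psd_2x2_quadratic_nonneg:
  fixes \<alpha> \<beta> p1 p2 q1 q2 w1 w2 :: real
  assumes "0 \<le> \<alpha>" "0 \<le> \<beta>" "w1^2 + w2^2 \<le> \<alpha> * \<beta>"
  shows "0 \<le> \<alpha> * (p1^2 + p2^2) + \<beta> * (q1^2 + q2^2) + 2 * (p1 * (w1 * q1 - w2 * q2) + p2 * (w1 * q2 + w2 * q1))"
    (is "0 \<le> ?Q")
proof (cases "\<alpha> = 0")
  case True
  then have "w1^2 + w2^2 \<le> 0" using assms(3) by simp
  then have "w1^2 + w2^2 = 0" by (smt (verit) zero_le_power2)
  then have "w1 = 0" "w2 = 0" by (simp_all add: sum_power2_eq_zero_iff)
  then show ?thesis using True assms(2) by simp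
next
  case False
  then have \<alpha>: "0 < \<alpha>" using assms(1) by simp
  have "\<alpha> * ?Q = (\<alpha> * p1 + (w1 * q1 - w2 * q2))^2 + (\<alpha> * p2 + (w1 * q2 + w2 * q1))^2
      + (\<alpha> * \<beta> - (w1^2 + w2^2)) * (q1^2 + q2^2)"
    by (simp add: power2_eq_square algebra_simps)
  also have "\<dots> \<ge> 0" using assms(3) by (intro add_nonneg_nonneg mult_nonneg_nonneg) auto
  finally show ?thesis using \<alpha> by (simp add: zero_le_mult_iff)
qed

lemma psd_2x2I:
  assumes M: "M \<in> carrier_mat 2 2" and h: "M $$ (1,0) = cnj (M $$ (0,1))"
    and d0: "M $$ (0,0) = of_real \<alpha>" and d1: "M $$ (1,1) = of_real \<beta>"
    and "0 \<le> \<alpha>" "0 \<le> \<beta>" and det: "(cmod (M $$ (0,1)))^2 \<le> \<alpha> * \<beta>"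
  shows "psd 2 M"
proof (rule psdI[OF M])
  fix i j :: nat assume "i < 2" "j < 2"
  then show "M $$ (j,i) = cnj (M $$ (i,j))" using h d0 d1 by (auto simp: less_2_cases_iff)
next
  fix v :: "complex vec" assume v: "v \<in> carrier_vec 2"
  let ?w = "M $$ (0,1)"
  have "Re (quad_form 2 M v) = \<alpha> * ((Re (v$0))^2 + (Im (v$0))^2) + \<beta> * ((Re (v$1))^2 + (Im (v$1))^2)
      + 2 * (Re (v$0) * (Re ?w * Re (v$1) - Im ?w * Im (v$1)) + Im (v$0) * (Re ?w * Im (v$1) + Im ?w * Re (v$1)))"
    unfolding quad_form_expand[OF M v] using h d0 d1
    by (simp add: sum_lessThan_2 power2_eq_square algebra_simps)
  also have "\<dots> \<ge> 0"
    using det assms by (intro psd_2x2_quadratic_nonneg) (auto simp: cmod_power2)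
  finally show "0 \<le> Re (quad_form 2 M v)" .
qed

text \<open>\<open>bloch_mat a x y z = (a I + x X + y Y + z Z) / 2\<close>.\<close>
definition bloch_mat :: "real \<Rightarrow> real \<Rightarrow> real \<Rightarrow> real \<Rightarrow> complex mat" where
  "bloch_mat a x y z = mat 2 2 (\<lambda>(i,j). if i = 0 \<and> j = 0 then of_real ((a+z)/2)
      else if i = 0 then of_real (x/2) - \<i> * of_real (y/2)
      else if j = 0 then of_real (x/2) + \<i> * of_real (y/2)
      else of_real ((a-z)/2))"

lemma bloch_mat_carrier: "bloch_mat a x y z \<in> carrier_mat 2 2"
  unfolding bloch_mat_def by simp

lemma bloch_mat_index:
  "bloch_mat a x y z $$ (0,0) = of_real ((a+z)/2)"
  "bloch_mat a x y z $$ (0,1) = of_real (x/2) - \<i> * of_real (y/2)"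
  "bloch_mat a x y z $$ (1,0) = of_real (x/2) + \<i> * of_real (y/2)"
  "bloch_mat a x y z $$ (1,1) = of_real ((a-z)/2)"
  "bloch_mat a x y z $$ (0,Suc 0) = of_real (x/2) - \<i> * of_real (y/2)"
  "bloch_mat a x y z $$ (Suc 0,0) = of_real (x/2) + \<i> * of_real (y/2)"
  "bloch_mat a x y z $$ (Suc 0,Suc 0) = of_real ((a-z)/2)"
  unfolding bloch_mat_def by simp_all

lemma bloch_mat_psd:
  assumes "0 \<le> a" "x^2 + y^2 + z^2 \<le> a^2"
  shows "psd 2 (bloch_mat a x y z)"
proof (rule psd_2x2I[OF bloch_mat_carrier])
  have "z^2 \<le> a^2" using assms(2) by (smt (verit) zero_le_power2)
  then have "\<bar>z\<bar> \<le> a" using assms(1) by (metis abs_le_square_iff abs_of_nonneg)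
  then show "0 \<le> (a+z)/2" "0 \<le> (a-z)/2" by auto
  have "(cmod (bloch_mat a x y z $$ (0,1)))^2 = (x/2)^2 + (y/2)^2"
    by (simp add: bloch_mat_index cmod_power2)
  also have "\<dots> \<le> (a+z)/2 * ((a-z)/2)" using assms(2) by (simp add: power2_eq_square field_simps)
  finally show "(cmod (bloch_mat a x y z $$ (0,1)))^2 \<le> (a+z)/2 * ((a-z)/2)" .
qed (simp_all add: bloch_mat_index)

lemma bloch_mat_diff:
  "of_real t \<cdot>\<^sub>m bloch_mat a x y z - bloch_mat a' x' y' z'
    = bloch_mat (t*a - a') (t*x - x') (t*y - y') (t*z - z')"
  by (rule eq_matI) (auto simp: bloch_mat_def less_2_cases_iff algebra_simps diff_divide_distrib add_divide_distrib)

lemma bloch_mat_quad_form: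
  "Re (quad_form 2 (bloch_mat a x y z) (vec 2 (\<lambda>i. if i = 0 then 1 else c))) =
     (a+z)/2 + (a-z)/2 * ((Re c)^2 + (Im c)^2) + x * Re c + y * Im c"
  "Re (quad_form 2 (bloch_mat a x y z) (vec 2 (\<lambda>i. if i = 0 then 0 else 1))) = (a-z)/2"
  by (simp_all add: quad_form_expand[OF bloch_mat_carrier] sum_lessThan_2 bloch_mat_index
      power2_eq_square algebra_simps) (simp add: field_simps)

lemma psd_bloch_mat_coord_bounds:
  assumes "psd 2 (bloch_mat 1 x y z)"
  shows "\<bar>x\<bar> \<le> 1" "\<bar>y\<bar> \<le> 1" "\<bar>z\<bar> \<le> 1"
proof -
  have test: "0 \<le> Re (quad_form 2 (bloch_mat 1 x y z) (vec 2 (\<lambda>i. if i = 0 then 1 else c)))" for c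
    using psd_quad_form_nonneg[OF assms] by simp
  have "0 \<le> 1 + x" "0 \<le> 1 - x" "0 \<le> 1 + y" "0 \<le> 1 - y" "0 \<le> (1 + z)/2"
    using test[of 1] test[of "-1"] test[of \<i>] test[of "-\<i>"] test[of 0]
    unfolding bloch_mat_quad_form by (simp_all add: field_simps)
  moreover have "0 \<le> (1 - z)/2"
    using psd_quad_form_nonneg[OF assms, of "vec 2 (\<lambda>i. if i = 0 then 0 else 1)"]
    unfolding bloch_mat_quad_form(2) by simp
  ultimately show "\<bar>x\<bar> \<le> 1" "\<bar>y\<bar> \<le> 1" "\<bar>z\<bar> \<le> 1" by auto
qed

definition bloch_x :: "complex mat \<Rightarrow> real" where "bloch_x M = 2 * Re (M $$ (0,1))"
definition bloch_y :: "complex mat \<Rightarrow> real" where "bloch_y M = - 2 * Im (M $$ (0,1))"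
definition bloch_z :: "complex mat \<Rightarrow> real" where "bloch_z M = Re (M $$ (0,0)) - Re (M $$ (1,1))"

lemma density_1_bloch_mat:
  assumes "density 1 \<rho>"
  shows "\<rho> = bloch_mat 1 (bloch_x \<rho>) (bloch_y \<rho>) (bloch_z \<rho>)"
proof -
  have \<rho>: "\<rho> \<in> carrier_mat 2 2" "psd 2 \<rho>" using density_carrier[OF assms] density_psd[OF assms] by simp_all
  have tr: "Re (\<rho> $$ (0,0)) + Re (\<rho> $$ (1,1)) = 1"
    using density_trace[OF assms] \<rho>(1) unfolding mtrace_def by (simp add: sum_lessThan_2 complex_eq_iff)
  have "\<rho> $$ (1,0) = cnj (\<rho> $$ (0,1))" "Im (\<rho> $$ (0,0)) = 0" "Im (\<rho> $$ (1,1)) = 0"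
    using psd_hermitian[OF \<rho>(2), of 0 1] psd_hermitian[OF \<rho>(2), of 0 0] psd_hermitian[OF \<rho>(2), of 1 1]
    by (simp_all add: complex_eq_iff)
  then show ?thesis using \<rho>(1) tr
    by (intro eq_matI) (auto simp: less_2_cases_iff bloch_mat_index bloch_x_def bloch_y_def bloch_z_def
        complex_eq_iff field_simps bloch_mat_def)
qed

lemma bloch_coords_real_comb:
  assumes "F \<subseteq> stab_projs 1"
  shows "bloch_x (real_comb 1 F q) = (\<Sum>P\<in>F. q P * bloch_x P)"
    and "bloch_y (real_comb 1 F q) = (\<Sum>P\<in>F. q P * bloch_y P)"
    and "bloch_z (real_comb 1 F q) = (\<Sum>P\<in>F. q P * bloch_z P)"
  using real_comb_index[OF assms, of 0 0 q] real_comb_index[OF assms, of 0 1 q] real_comb_index[OF assms, of 1 1 q]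
  by (simp_all add: bloch_x_def bloch_y_def bloch_z_def Re_sum Im_sum sum_distrib_left
      sum_subtractf[symmetric] right_diff_distrib mult_ac)

lemma signed_pauli_string_1_mult_index:
  assumes "\<psi> \<in> carrier_vec 2" "i < 2"
  shows "((of_real \<sigma> \<cdot>\<^sub>m pauli_string 1 s) *\<^sub>v \<psi>) $ i
    = of_real \<sigma> * (pauli1_entry (s 0) i 0 * \<psi> $ 0 + pauli1_entry (s 0) i 1 * \<psi> $ 1)"
proof -
  have "((of_real \<sigma> \<cdot>\<^sub>m pauli_string 1 s) *\<^sub>v \<psi>) $ i = of_real \<sigma> * (pauli_string 1 s *\<^sub>v \<psi>) $ i"
    using assms by (intro smult_mult_mat_vec_index) auto
  also have "(pauli_string 1 s *\<^sub>v \<psi>) $ i = row (pauli_string 1 s) i \<bullet> \<psi>"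
    using assms by simp
  also have "\<dots> = (\<Sum>j<2. pauli_string 1 s $$ (i,j) * \<psi> $ j)"
    using assms unfolding scalar_prod_def by (intro sum.cong) auto
  finally show ?thesis
    using assms(2) by (simp add: sum_lessThan_2 pauli_string_index pauli1_index)
qed

lemma stabilizer_state_1_nontrivial:
  assumes "stabilizer_state 1 \<psi>"
  obtains \<sigma> s where "\<sigma> = 1 \<or> \<sigma> = -1" "s 0 \<in> {1,2,3}"
    "(of_real \<sigma> \<cdot>\<^sub>m pauli_string 1 s) *\<^sub>v \<psi> = \<psi>"
proof -
  have \<psi>: "\<psi> \<in> carrier_vec 2" "(cmod (\<psi> $ 0))^2 + (cmod (\<psi> $ 1))^2 = 1"
    and card: "card (stab_group 1 \<psi>) = 2"
    using assms unfolding stabilizer_state_def by (simp_all add: sum_lessThan_2)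
  define I where "I = of_real 1 \<cdot>\<^sub>m pauli_string 1 (\<lambda>_. 0)"
  have "\<not> stab_group 1 \<psi> \<subseteq> {I}"
    using card card_mono[of "{I}" "stab_group 1 \<psi>"] by auto
  then obtain \<sigma> s where \<sigma>: "\<sigma> = 1 \<or> \<sigma> = -1" and s: "s 0 < 4"
    and stab: "(of_real \<sigma> \<cdot>\<^sub>m pauli_string 1 s) *\<^sub>v \<psi> = \<psi>"
    and ne: "of_real \<sigma> \<cdot>\<^sub>m pauli_string 1 s \<noteq> I"
    unfolding stab_group_def signed_paulis_def by auto
  have "s 0 \<noteq> 0"
  proof
    assume s0: "s 0 = 0"
    have "\<sigma> \<noteq> -1"
    proof
      assume "\<sigma> = -1"
      then have "\<psi> $ i = - \<psi> $ i" if "i < 2" for i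
        using signed_pauli_string_1_mult_index[OF \<psi>(1) that, of \<sigma> s] stab s0 that
        by (auto simp: pauli1_entry_def less_2_cases_iff)
      from this[of 0] this[of 1] have "\<psi> $ 0 = 0" "\<psi> $ 1 = 0" by (simp_all add: complex_eq_iff)
      then show False using \<psi>(2) by simp
    qed
    moreover have "pauli_string 1 s = pauli_string 1 (\<lambda>_. 0)"
      using s0 by (intro pauli_string_cong) simp
    ultimately show False using ne \<sigma> unfolding I_def by simp
  qed
  then have "s 0 \<in> {1,2,3}" using s by auto
  then show ?thesis by (rule that[OF \<sigma> _ stab])
qed

lemma amplitudes_phase_related:
  fixes a b c :: complex
  assumes ab: "a = c * b" and c: "cmod c = 1" and nm: "(cmod a)^2 + (cmod b)^2 = 1"
  shows "a * cnj b = c / 2" "Re (a * cnj a) = Re (b * cnj b)"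
proof -
  have "cmod a = cmod b" using ab c by (simp add: norm_mult)
  then have "(cmod b)^2 = 1/2" "(cmod a)^2 = 1/2" using nm by simp_all
  then have bb: "b * cnj b = 1/2" and aa: "a * cnj a = 1/2"
    by (simp_all only: complex_norm_square[symmetric]) simp_all
  show "a * cnj b = c / 2" using bb unfolding ab by (simp add: mult.assoc)
  show "Re (a * cnj a) = Re (b * cnj b)" by (simp only: aa bb)
qed

lemma stab_proj_1_bloch_l1:
  assumes "P \<in> stab_projs 1"
  shows "\<bar>bloch_x P\<bar> + \<bar>bloch_y P\<bar> + \<bar>bloch_z P\<bar> \<le> 1"
proof -
  obtain \<psi> where P: "P = outer \<psi>" and st: "stabilizer_state 1 \<psi>"
    using assms unfolding stab_projs_def by blast
  have \<psi>: "\<psi> \<in> carrier_vec 2" and nm: "(cmod (\<psi> $ 0))^2 + (cmod (\<psi> $ 1))^2 = 1"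
    using st unfolding stabilizer_state_def by (simp_all add: sum_lessThan_2)
  obtain \<sigma> s where \<sigma>: "\<sigma> = 1 \<or> \<sigma> = -1" and s: "s 0 \<in> {1,2,3}"
    and stab: "(of_real \<sigma> \<cdot>\<^sub>m pauli_string 1 s) *\<^sub>v \<psi> = \<psi>"
    using stabilizer_state_1_nontrivial[OF st] by blast
  have E: "of_real \<sigma> * (pauli1_entry (s 0) i 0 * \<psi> $ 0 + pauli1_entry (s 0) i 1 * \<psi> $ 1) = \<psi> $ i"
    if "i < 2" for i
    using signed_pauli_string_1_mult_index[OF \<psi> that, of \<sigma> s] by (metis stab)
  have bloch: "bloch_x P = 2 * Re (\<psi> $ 0 * cnj (\<psi> $ 1))" "bloch_y P = - 2 * Im (\<psi> $ 0 * cnj (\<psi> $ 1))"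
    "bloch_z P = Re (\<psi> $ 0 * cnj (\<psi> $ 0)) - Re (\<psi> $ 1 * cnj (\<psi> $ 1))"
    unfolding P bloch_x_def bloch_y_def bloch_z_def outer_def using \<psi> by simp_all
  consider "s 0 = 1" | "s 0 = 2" | "s 0 = 3" using s by auto
  then show ?thesis
  proof cases
    case 1
    then have "\<psi> $ 0 = of_real \<sigma> * \<psi> $ 1" using E[of 0] by (simp add: pauli1_entry_def)
    moreover have "cmod (of_real \<sigma> :: complex) = 1" using \<sigma> by auto
    ultimately have r: "\<psi> $ 0 * cnj (\<psi> $ 1) = of_real \<sigma> / 2"
      and d: "Re (\<psi> $ 0 * cnj (\<psi> $ 0)) = Re (\<psi> $ 1 * cnj (\<psi> $ 1))"
      using amplitudes_phase_related[OF _ _ nm] by blast+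
    show ?thesis unfolding bloch r d using \<sigma> by auto
  next
    case 2
    then have "\<psi> $ 0 = (- \<i> * of_real \<sigma>) * \<psi> $ 1" using E[of 0] by (simp add: pauli1_entry_def algebra_simps)
    moreover have "cmod (- \<i> * of_real \<sigma>) = 1" using \<sigma> by (auto simp: norm_mult)
    ultimately have r: "\<psi> $ 0 * cnj (\<psi> $ 1) = - \<i> * of_real \<sigma> / 2"
      and d: "Re (\<psi> $ 0 * cnj (\<psi> $ 0)) = Re (\<psi> $ 1 * cnj (\<psi> $ 1))"
      using amplitudes_phase_related[OF _ _ nm] by blast+
    show ?thesis unfolding bloch r d using \<sigma> by auto
  next
    case 3
    then have "\<psi> $ 0 = 0 \<or> \<psi> $ 1 = 0" using \<sigma> E[of 0] E[of 1] by (auto simp: pauli1_entry_def)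
    then show ?thesis using nm unfolding bloch complex_norm_square[symmetric] by auto
  qed
qed

lemma bloch_l1_real_comb_le:
  assumes "F \<subseteq> stab_projs 1"
  shows "\<bar>bloch_x (real_comb 1 F q)\<bar> + \<bar>bloch_y (real_comb 1 F q)\<bar> + \<bar>bloch_z (real_comb 1 F q)\<bar>
    \<le> (\<Sum>P\<in>F. \<bar>q P\<bar>)"
proof -
  have "\<bar>bloch_x (real_comb 1 F q)\<bar> + \<bar>bloch_y (real_comb 1 F q)\<bar> + \<bar>bloch_z (real_comb 1 F q)\<bar>
      \<le> (\<Sum>P\<in>F. \<bar>q P\<bar> * \<bar>bloch_x P\<bar>) + (\<Sum>P\<in>F. \<bar>q P\<bar> * \<bar>bloch_y P\<bar>) + (\<Sum>P\<in>F. \<bar>q P\<bar> * \<bar>bloch_z P\<bar>)"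
    unfolding bloch_coords_real_comb[OF assms]
    by (intro add_mono order_trans[OF sum_abs]) (simp_all add: abs_mult)
  also have "\<dots> = (\<Sum>P\<in>F. \<bar>q P\<bar> * (\<bar>bloch_x P\<bar> + \<bar>bloch_y P\<bar> + \<bar>bloch_z P\<bar>))"
    by (simp add: sum.distrib[symmetric] distrib_left)
  also have "\<dots> \<le> (\<Sum>P\<in>F. \<bar>q P\<bar>)"
    using assms stab_proj_1_bloch_l1 by (intro sum_mono mult_right_le_one_le) auto
  finally show ?thesis .
qed

lemma stab_mixedI:
  assumes V: "finite V" and Q: "\<And>v. v \<in> V \<Longrightarrow> Q v \<in> stab_projs n"
    and w: "\<And>v. v \<in> V \<Longrightarrow> 0 \<le> w v" "(\<Sum>v\<in>V. w v) = 1"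
    and A: "A \<in> carrier_mat (2^n) (2^n)"
    and ent: "\<And>i j. i < 2^n \<Longrightarrow> j < 2^n \<Longrightarrow> A $$ (i,j) = (\<Sum>v\<in>V. of_real (w v) * Q v $$ (i,j))"
  shows "A \<in> stab_mixed n"
  unfolding stab_mixed_def
proof (intro CollectI exI conjI)
  show "A = real_comb n (Q ` V) (\<lambda>P. \<Sum>v\<in>{v\<in>V. Q v = P}. w v)"
    by (rule real_comb_image_eq[OF V Q A ent])
  show "\<forall>P\<in>Q ` V. 0 \<le> (\<Sum>v\<in>{v\<in>V. Q v = P}. w v)" using w(1) by (auto intro: sum_nonneg)
  show "(\<Sum>P\<in>Q ` V. \<Sum>v\<in>{v\<in>V. Q v = P}. w v) = 1" using sum.image_gen[OF V, of w Q] w(2) by simp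
qed (use V Q in auto)

lemma Im_half_sqrt2 [simp]: "Im half_sqrt2 = 0"
  unfolding half_sqrt2_def by simp

lemma Re_half_sqrt2_sq: "Re half_sqrt2 * Re half_sqrt2 = 1/2" "Re half_sqrt2 * (Re half_sqrt2 * c) = c/2"
  using half_sqrt2_sq unfolding half_sqrt2_def by (simp_all add: mult.assoc[symmetric] flip: of_real_mult)

text \<open>The six states have Bloch vectors \<open>\<plusminus>e\<^sub>z, \<plusminus>e\<^sub>x, \<plusminus>e\<^sub>y\<close>; the weights put the positive
  and negative part of each coordinate on the matching pair and spread the rest evenly.\<close>
lemma bloch_mat_stab_mixed:
  assumes "\<bar>x\<bar> + \<bar>y\<bar> + \<bar>z\<bar> \<le> 1"
  shows "bloch_mat 1 x y z \<in> stab_mixed 1"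
proof -
  define u where "u = (1 - (\<bar>x\<bar> + \<bar>y\<bar> + \<bar>z\<bar>)) / 6"
  define w where "w v = (if v = 0 then max z 0 else if v = 1 then max (-z) 0 else if v = 2 then max x 0
     else if v = 3 then max y 0 else if v = 4 then max (-x) 0 else max (-y) 0) + u" for v :: nat
  have u: "0 \<le> u" using assms unfolding u_def by simp
  have w_diff: "w 0 - w 1 = z" "w 2 - w 4 = x" "w 3 - w 5 = y" unfolding w_def by auto
  have w_sum: "w 0 + w 1 + w 2 + w 3 + w 4 + w 5 = 1"
    unfolding w_def u_def by (simp add: field_simps)
  show ?thesis
  proof (rule stab_mixedI[where V = "{..<6}" and Q = "\<lambda>v. outer (product_state 1 (\<lambda>_. v))" and w = w])
    show "outer (product_state 1 (\<lambda>_. v)) \<in> stab_projs 1" if "v \<in> {..<6}" for v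
      using that product_state_stabilizer[of 1 "\<lambda>_. v"] unfolding stab_projs_def by auto
    show "0 \<le> w v" for v using u unfolding w_def by auto
    show "(\<Sum>v<6. w v) = 1" using w_sum by (simp add: sum_lessThan_6)
    fix i j :: nat assume "i < 2^1" "j < 2^1"
    then have ij: "i < 2" "j < 2" by simp_all
    have "(\<Sum>v<6. of_real (w v) * outer (product_state 1 (\<lambda>_. v)) $$ (i,j))
        = (\<Sum>v<6. of_real (w v) * (stab1_amp v i * cnj (stab1_amp v j)))"
      using ij outer_product_state_index[of i 1 j] by (intro sum.cong refl) simp
    also have "\<dots> = bloch_mat 1 x y z $$ (i,j)"
      using ij w_diff w_sum
      by (auto simp: less_2_cases_iff sum_lessThan_6 bloch_mat_index stab1_amp_def complex_eq_iff
          field_simps half_sqrt2_sq Re_half_sqrt2_sq)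
    finally show "bloch_mat 1 x y z $$ (i,j) = (\<Sum>v<6. of_real (w v) * outer (product_state 1 (\<lambda>_. v)) $$ (i,j))"
      by simp
  qed (simp_all add: bloch_mat_carrier)
qed

section \<open>One qubit: approximation from the stabilizer octahedron\<close>

lemma abs_sub_mult_sgn:
  fixes r k :: real
  assumes "0 \<le> k" "k \<le> \<bar>r\<bar>"
  shows "\<bar>r - k * sgn r\<bar> = \<bar>r\<bar> - k"
  using assms by (cases "r > 0"; cases "r < 0") (auto simp: sgn_if)

text \<open>Shrinking the two largest coordinates towards \<open>0\<close> by \<open>k = (s - 1)/(2 + \<surd>2)\<close> gives a point
  \<open>l b\<close> with \<open>\<parallel>b\<parallel>\<^sub>1 = 1\<close> at Euclidean distance \<open>\<surd>2 k = l - 1\<close> from \<open>r\<close>.\<close>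
lemma octahedron_approx_sorted:
  fixes r1 r2 r3 :: real
  defines "s \<equiv> \<bar>r1\<bar> + \<bar>r2\<bar> + \<bar>r3\<bar>"
  defines "l \<equiv> (s + sqrt 2) / (1 + sqrt 2)"
  assumes r: "\<bar>r1\<bar> \<le> 1" "\<bar>r2\<bar> \<le> 1" "\<bar>r3\<bar> \<le> \<bar>r1\<bar>" "\<bar>r3\<bar> \<le> \<bar>r2\<bar>" and s1: "1 < s"
  shows "\<exists>b1 b2 b3. \<bar>b1\<bar> + \<bar>b2\<bar> + \<bar>b3\<bar> \<le> 1 \<and>
    (l * b1 - r1)^2 + (l * b2 - r2)^2 + (l * b3 - r3)^2 \<le> (l - 1)^2"
proof -
  define t where "t = sqrt (2::real)"
  have t: "t * t = 2" "0 < t" unfolding t_def by simp_all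
  define k where "k = (s - 1) / (t + 2)"
  have l_pos: "0 < l" unfolding l_def t_def[symmetric] using t s1 by simp
  have k_pos: "0 \<le> k" unfolding k_def using t s1 by simp
  have l_minus_1: "(l - 1)^2 = 2 * k^2"
  proof -
    have l1: "l - 1 = (s - 1) / (1 + t)" unfolding l_def t_def[symmetric] using t by (simp add: field_simps)
    have "(t + 2)^2 = 2 * (1 + t)^2" using t by (simp add: power2_eq_square algebra_simps)
    then show ?thesis unfolding l1 k_def using t by (simp add: power_divide field_simps)
  qed
  have s_minus_2k: "s - 2 * k = l"
  proof -
    have tt: "t * (t * x) = 2 * x" for x using t by (metis mult.assoc)
    have "(s - 2 * k) * ((1 + t) * (t + 2)) = l * ((1 + t) * (t + 2))"
      unfolding k_def l_def t_def[symmetric] using t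
      by (simp add: field_simps power2_eq_square algebra_simps) (simp add: tt)
    then show ?thesis using t by simp
  qed
  have k_half: "k \<le> (s - 1) / 2" unfolding k_def using t s1 by (intro divide_left_mono) auto
  have "s - 1 \<le> 2 * \<bar>r1\<bar>" using r unfolding s_def by linarith
  then have k_le1: "k \<le> \<bar>r1\<bar>" using k_half by (simp add: field_simps)
  have "s - 1 \<le> 2 * \<bar>r2\<bar>" using r unfolding s_def by linarith
  then have k_le2: "k \<le> \<bar>r2\<bar>" using k_half by (simp add: field_simps)
  define b1 where "b1 = (r1 - k * sgn r1) / l"
  define b2 where "b2 = (r2 - k * sgn r2) / l"
  define b3 where "b3 = r3 / l"
  have "\<bar>b1\<bar> + \<bar>b2\<bar> + \<bar>b3\<bar> = (\<bar>r1\<bar> - k + (\<bar>r2\<bar> - k) + \<bar>r3\<bar>) / l"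
    unfolding b1_def b2_def b3_def using l_pos abs_sub_mult_sgn[OF k_pos k_le1] abs_sub_mult_sgn[OF k_pos k_le2]
    by (simp add: field_simps)
  also have "\<dots> = 1" using s_minus_2k l_pos unfolding s_def by simp
  finally have b_l1: "\<bar>b1\<bar> + \<bar>b2\<bar> + \<bar>b3\<bar> \<le> 1" by simp
  have sgn_sq: "(sgn x)^2 \<le> (1::real)" for x by (cases "x > 0"; cases "x < 0") (auto simp: sgn_if)
  have diff: "l * b1 - r1 = - k * sgn r1" "l * b2 - r2 = - k * sgn r2" "l * b3 - r3 = 0"
    unfolding b1_def b2_def b3_def using l_pos by simp_all
  have "(l * b1 - r1)^2 + (l * b2 - r2)^2 + (l * b3 - r3)^2 = k^2 * ((sgn r1)^2 + (sgn r2)^2)"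
    unfolding diff by (simp add: power_mult_distrib algebra_simps)
  also have "\<dots> \<le> k^2 * 2" using sgn_sq[of r1] sgn_sq[of r2] by (intro mult_left_mono) auto
  finally show ?thesis using b_l1 l_minus_1 by (intro exI[of _ b1] exI[of _ b2] exI[of _ b3]) simp
qed

lemma octahedron_approx:
  fixes r1 r2 r3 :: real
  defines "s \<equiv> \<bar>r1\<bar> + \<bar>r2\<bar> + \<bar>r3\<bar>"
  defines "l \<equiv> (s + sqrt 2) / (1 + sqrt 2)"
  assumes r: "\<bar>r1\<bar> \<le> 1" "\<bar>r2\<bar> \<le> 1" "\<bar>r3\<bar> \<le> 1" and s1: "1 < s"
  shows "\<exists>b1 b2 b3. \<bar>b1\<bar> + \<bar>b2\<bar> + \<bar>b3\<bar> \<le> 1 \<and>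
    (l * b1 - r1)^2 + (l * b2 - r2)^2 + (l * b3 - r3)^2 \<le> (l - 1)^2"
proof -
  consider "\<bar>r3\<bar> \<le> \<bar>r1\<bar> \<and> \<bar>r3\<bar> \<le> \<bar>r2\<bar>" | "\<bar>r1\<bar> \<le> \<bar>r2\<bar> \<and> \<bar>r1\<bar> \<le> \<bar>r3\<bar>" | "\<bar>r2\<bar> \<le> \<bar>r1\<bar> \<and> \<bar>r2\<bar> \<le> \<bar>r3\<bar>"
    by linarith
  then show ?thesis
  proof cases
    case 1
    then show ?thesis using octahedron_approx_sorted[of r1 r2 r3] r s1 unfolding s_def l_def by blast
  next
    case 2
    then obtain b2 b3 b1 where "\<bar>b2\<bar> + \<bar>b3\<bar> + \<bar>b1\<bar> \<le> 1 \<and>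
        (l * b2 - r2)^2 + (l * b3 - r3)^2 + (l * b1 - r1)^2 \<le> (l - 1)^2"
      using octahedron_approx_sorted[of r2 r3 r1] r s1 unfolding s_def l_def by (auto simp: add_ac)
    then show ?thesis by (intro exI[of _ b1] exI[of _ b2] exI[of _ b3]) auto
  next
    case 3
    then obtain b1 b3 b2 where "\<bar>b1\<bar> + \<bar>b3\<bar> + \<bar>b2\<bar> \<le> 1 \<and>
        (l * b1 - r1)^2 + (l * b3 - r3)^2 + (l * b2 - r2)^2 \<le> (l - 1)^2"
      using octahedron_approx_sorted[of r1 r3 r2] r s1 unfolding s_def l_def by (auto simp: add_ac)
    then show ?thesis by (intro exI[of _ b1] exI[of _ b2] exI[of _ b3]) auto
  qed
qed

lemma gen_robustness_1_le:
  assumes \<rho>: "density 1 \<rho>"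
  shows "(1 + sqrt 2) * gen_robustness 1 \<rho> - sqrt 2 \<le> max 1 (\<bar>bloch_x \<rho>\<bar> + \<bar>bloch_y \<rho>\<bar> + \<bar>bloch_z \<rho>\<bar>)"
proof -
  define x y z where "x = bloch_x \<rho>" and "y = bloch_y \<rho>" and "z = bloch_z \<rho>"
  define s where "s = \<bar>x\<bar> + \<bar>y\<bar> + \<bar>z\<bar>"
  have \<rho>_eq: "\<rho> = bloch_mat 1 x y z" unfolding x_def y_def z_def by (rule density_1_bloch_mat[OF \<rho>])
  have r: "\<bar>x\<bar> \<le> 1" "\<bar>y\<bar> \<le> 1" "\<bar>z\<bar> \<le> 1"
    using psd_bloch_mat_coord_bounds[of x y z] density_psd[OF \<rho>] \<rho>_eq by simp_all
  have c: "0 < 1 + sqrt (2::real)" by (simp add: add_pos_nonneg)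
  show ?thesis
  proof (cases "s \<le> 1")
    case True
    have "bloch_mat 1 x y z \<in> stab_mixed 1" using True unfolding s_def by (rule bloch_mat_stab_mixed)
    moreover have "psd (2^1) (of_real 1 \<cdot>\<^sub>m bloch_mat 1 x y z - \<rho>)"
      unfolding \<rho>_eq bloch_mat_diff using bloch_mat_psd[of 0 0 0 0] by simp
    ultimately have "gen_robustness 1 \<rho> \<le> 1" by (rule gen_robustness_le[OF \<rho>])
    then have "(1 + sqrt 2) * gen_robustness 1 \<rho> \<le> (1 + sqrt 2) * 1" using c by (intro mult_left_mono) auto
    then show ?thesis by simp
  next
    case False
    define l where "l = (s + sqrt 2) / (1 + sqrt 2)"
    obtain b1 b2 b3 where b: "\<bar>b1\<bar> + \<bar>b2\<bar> + \<bar>b3\<bar> \<le> 1"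
      and close: "(l * b1 - x)^2 + (l * b2 - y)^2 + (l * b3 - z)^2 \<le> (l - 1)^2"
      using octahedron_approx[OF r] False unfolding s_def l_def by auto
    have l1: "1 \<le> l" unfolding l_def using False c by (simp add: field_simps)
    have "bloch_mat 1 b1 b2 b3 \<in> stab_mixed 1" by (rule bloch_mat_stab_mixed[OF b])
    moreover have "psd (2^1) (of_real l \<cdot>\<^sub>m bloch_mat 1 b1 b2 b3 - \<rho>)"
      unfolding \<rho>_eq bloch_mat_diff
      using bloch_mat_psd[of "l * 1 - 1" "l * b1 - x" "l * b2 - y" "l * b3 - z"] l1 close by simp
    ultimately have "gen_robustness 1 \<rho> \<le> l" by (rule gen_robustness_le[OF \<rho>])
    then have "(1 + sqrt 2) * gen_robustness 1 \<rho> \<le> (1 + sqrt 2) * l" using c by (intro mult_left_mono) auto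
    also have "(1 + sqrt 2) * l = s + sqrt 2" unfolding l_def using c by simp
    finally show ?thesis unfolding s_def x_def y_def z_def by simp
  qed
qed

theorem robustness_ge_gen_robustness_1:
  assumes \<rho>: "density 1 \<rho>"
  shows "(1 + sqrt 2) * gen_robustness 1 \<rho> - sqrt 2 \<le> robustness 1 \<rho>"
proof (rule robustness_geI[OF \<rho>])
  fix F q assume F: "finite F" "F \<subseteq> stab_projs 1" and decomp: "\<rho> = real_comb 1 F q"
  have "1 \<le> (\<Sum>P\<in>F. \<bar>q P\<bar>)"
    using real_comb_coeff_sum[OF \<rho> F(2) decomp] sum_mono[of F q "\<lambda>P. \<bar>q P\<bar>"] by auto
  moreover have "\<bar>bloch_x \<rho>\<bar> + \<bar>bloch_y \<rho>\<bar> + \<bar>bloch_z \<rho>\<bar> \<le> (\<Sum>P\<in>F. \<bar>q P\<bar>)"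
    unfolding decomp by (rule bloch_l1_real_comb_le[OF F(2)])
  ultimately show "(1 + sqrt 2) * gen_robustness 1 \<rho> - sqrt 2 \<le> (\<Sum>P\<in>F. \<bar>q P\<bar>)"
    using gen_robustness_1_le[OF \<rho>] by linarith
qed

theorem lemma5:
  fixes n :: nat and \<rho> :: "complex mat"
  assumes "density n \<rho>"
  shows "robustness n \<rho> \<ge> 2 * gen_robustness n \<rho> - 1 \<and>
         (n = 1 \<longrightarrow> robustness n \<rho> \<ge> (1 + sqrt 2) * gen_robustness n \<rho> - sqrt 2)"
  using robustness_ge_gen_robustness[OF assms] robustness_ge_gen_robustness_1[of \<rho>] assms by auto

end
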